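(* Assume the hypotheses of the following setting: $f:\mathbb{R}^p\to\mathbb{R}$ is three times continuously differentiable with $\mathbf{H}(\mathbf{x})=d^2f(\mathbf{x})$ positive definite for all $\mathbf{x}$; $I\subset(0,\infty)$ is an open interval on which $\mathcal{E}_\rho$ has minimizer $\mathbf{x}(\rho)$, $\rho\mapsto\mathbf{x}(\rho)$ is continuous, the index sets are constant, and the rows of $\mathbf{U}_{\mathcal{Z}}$ are linearly independent. Write $\mathbf{P}(\rho)=\mathbf{P}(\mathbf{x}(\rho))$, $\mathbf{Q}(\rho)=\mathbf{Q}(\mathbf{x}(\rho))$, $\mathbf{R}(\rho)=\mathbf{R}(\mathbf{x}(\rho))$. Then on $I$ these matrix functions are differentiable and satisfy $$D\mathbf{P}(\rho)=[\mathbf{P}(\mathbf{x})\otimes\mathbf{P}(\mathbf{x})]\cdot D\mathbf{H}(\mathbf{x})\cdot\mathbf{P}(\mathbf{x})\mathbf{u}_{\bar{\mathcal{Z}}},$$ $$D\mathbf{Q}(\rho)=[\mathbf{Q}^t(\mathbf{x})\otimes\mathbf{P}(\mathbf{x})]\cdot D\mathbf{H}(\mathbf{x})\cdot\mathbf{P}(\mathbf{x})\mathbf{u}_{\bar{\mathcal{Z}}},$$ $$D\mathbf{R}(\rho)=[\mathbf{Q}^t(\mathbf{x})\otimes\mathbf{Q}^t(\mathbf{x})]\cdot D\mathbf{H}(\mathbf{x})\cdot\mathbf{P}(\mathbf{x})\mathbf{u}_{\bar{\mathcal{Z}}},$$ where $\mathbf{x}=\mathbf{x}(\rho)$.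
   Context: Setting: $g_i(\mathbf{x})=\mathbf{v}_i^t\mathbf{x}-d_i$ ($1\le i\le r$), $h_j(\mathbf{x})=\mathbf{w}_j^t\mathbf{x}-e_j$ ($1\le j\le s$); $\mathcal{E}_\rho(\mathbf{x})=f(\mathbf{x})+\rho\sum_i|g_i(\mathbf{x})|+\rho\sum_j\max\{0,h_j(\mathbf{x})\}$. Index sets at $\mathbf{x}$: $\mathcal{N}_E=\{i:g_i(\mathbf{x})<0\}$, $\mathcal{Z}_E=\{i:g_i(\mathbf{x})=0\}$, $\mathcal{P}_E=\{i:g_i(\mathbf{x})>0\}$, $\mathcal{N}_I=\{j:h_j(\mathbf{x})<0\}$, $\mathcal{Z}_I=\{j:h_j(\mathbf{x})=0\}$, $\mathcal{P}_I=\{j:h_j(\mathbf{x})>0\}$. $\mathbf{U}_{\mathcal{Z}}$ has rows $\mathbf{v}_i^t$ ($i\in\mathcal{Z}_E$), $\mathbf{w}_j^t$ ($j\in\mathcal{Z}_I$); $\mathbf{u}_{\bar{\mathcal{Z}}}=-\sum_{i\in\mathcal{N}_E}\mathbf{v}_i+\sum_{i\in\mathcal{P}_E}\mathbf{v}_i+\sum_{j\in\mathcal{P}_I}\mathbf{w}_j$. With $\mathbf{H}=d^2f(\mathbf{x})$: $\mathbf{P}(\mathbf{x})=\mathbf{H}^{-1}-\mathbf{H}^{-1}\mathbf{U}_{\mathcal{Z}}^t[\mathbf{U}_{\mathcal{Z}}\mathbf{H}^{-1}\mathbf{U}_{\mathcal{Z}}^t]^{-1}\mathbf{U}_{\mathcal{Z}}\mathbf{H}^{-1}$,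 $\mathbf{Q}(\mathbf{x})=\mathbf{H}^{-1}\mathbf{U}_{\mathcal{Z}}^t[\mathbf{U}_{\mathcal{Z}}\mathbf{H}^{-1}\mathbf{U}_{\mathcal{Z}}^t]^{-1}$, $\mathbf{R}(\mathbf{x})=-[\mathbf{U}_{\mathcal{Z}}\mathbf{H}^{-1}\mathbf{U}_{\mathcal{Z}}^t]^{-1}$. Jacobian notation: for a matrix function $F(\mathbf{X})$, $DF(\mathbf{X})=\partial\,\mathrm{vec}F(\mathbf{X})/\partial(\mathrm{vec}\mathbf{X})^t$ (vec stacks columns); in particular $D\mathbf{P}(\rho)=d\,\mathrm{vec}\mathbf{P}(\rho)/d\rho$, and $D\mathbf{H}(\mathbf{x})=\partial\,\mathrm{vec}\,d^2f(\mathbf{x})/\partial\mathbf{x}^t$ is the $p^2\times p$ Jacobian of the Hessian. $\otimes$ is the Kronecker product. *)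

theory Defs
  imports "HOL-Analysis.Analysis"
begin

definition partial :: "'n::finite \<Rightarrow> (real^'n \<Rightarrow> real) \<Rightarrow> real^'n \<Rightarrow> real" where
  "partial m g = (\<lambda>x. frechet_derivative g (at x) (axis m 1))"

definition C3 :: "(real^'n::finite \<Rightarrow> real) \<Rightarrow> bool" where
  "C3 f \<longleftrightarrow> (\<forall>x. f differentiable at x)
     \<and> (\<forall>i x. partial i f differentiable at x)
     \<and> (\<forall>i j x. partial j (partial i f) differentiable at x)
     \<and> (\<forall>i j k. continuous_on UNIV (partial k (partial j (partial i f))))"

definition hess :: "(real^'n::finite \<Rightarrow> real) \<Rightarrow> real^'n \<Rightarrow> real^'n^'n" where
  "hess f x = (\<chi> i j. partial i (partial j f) x)"

text \<open>Generic matrices as functions of (row index, column index).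
  vec stacks columns: the entry (i,j) of A sits at position (j,i) of vec A
  (pairs ordered lexicographically, which is the column-stacking order).
  The Kronecker product uses the matching pair indexing:
  (A \<otimes> B) at row (a,c), column (b,d) equals A a b * B c d.\<close>
definition vecm :: "('a \<Rightarrow> 'b \<Rightarrow> real) \<Rightarrow> 'b \<times> 'a \<Rightarrow> real" where
  "vecm A = (\<lambda>(j,i). A i j)"

definition kron :: "('a \<Rightarrow> 'b \<Rightarrow> real) \<Rightarrow> ('c \<Rightarrow> 'd \<Rightarrow> real) \<Rightarrow> 'a \<times> 'c \<Rightarrow> 'b \<times> 'd \<Rightarrow> real" where
  "kron A B = (\<lambda>(a,c) (b,d). A a b * B c d)"

definition transm :: "('a \<Rightarrow> 'b \<Rightarrow> real) \<Rightarrow> 'b \<Rightarrow> 'a \<Rightarrow> real" where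
  "transm A = (\<lambda>j i. A i j)"

text \<open>DH(x) = d vec(d^2 f(x)) / d x^t : row (l,k) (= entry H_{kl} of vec H), column m.\<close>
definition DHess :: "(real^'n::finite \<Rightarrow> real) \<Rightarrow> real^'n \<Rightarrow> 'n \<times> 'n \<Rightarrow> 'n \<Rightarrow> real" where
  "DHess f x = (\<lambda>(l,k) m. partial m (\<lambda>y. hess f y $ k $ l) x)"

definition inv_on :: "'a set \<Rightarrow> ('a \<Rightarrow> 'a \<Rightarrow> real) \<Rightarrow> 'a \<Rightarrow> 'a \<Rightarrow> real" where
  "inv_on S A = (THE B. (\<forall>i j. (i \<notin> S \<or> j \<notin> S) \<longrightarrow> B i j = 0)
      \<and> (\<forall>i\<in>S. \<forall>j\<in>S. (\<Sum>k\<in>S. A i k * B k j) = (if i = j then 1 else 0)))"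

definition gE :: "(nat \<Rightarrow> real^'n) \<Rightarrow> (nat \<Rightarrow> real) \<Rightarrow> nat \<Rightarrow> real^'n \<Rightarrow> real" where
  "gE v d i x = v i \<bullet> x - d i"

definition hI :: "(nat \<Rightarrow> real^'n) \<Rightarrow> (nat \<Rightarrow> real) \<Rightarrow> nat \<Rightarrow> real^'n \<Rightarrow> real" where
  "hI w e j x = w j \<bullet> x - e j"

definition penalty :: "(real^'n \<Rightarrow> real) \<Rightarrow> (nat \<Rightarrow> real^'n) \<Rightarrow> (nat \<Rightarrow> real) \<Rightarrow> nat
    \<Rightarrow> (nat \<Rightarrow> real^'n) \<Rightarrow> (nat \<Rightarrow> real) \<Rightarrow> nat \<Rightarrow> real \<Rightarrow> real^'n \<Rightarrow> real" where
  "penalty f v d r w e s \<rho> x = f x + \<rho> * (\<Sum>i<r. \<bar>gE v d i x\<bar>) + \<rho> * (\<Sum>j<s. max 0 (hI w e j x))"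

definition NE where "NE v d r x = {i. i < r \<and> gE v d i x < 0}"
definition ZE where "ZE v d r x = {i. i < r \<and> gE v d i x = 0}"
definition PE where "PE v d r x = {i. i < r \<and> gE v d i x > 0}"
definition NI where "NI w e s x = {j. j < s \<and> hI w e j x < 0}"
definition ZI where "ZI w e s x = {j. j < s \<and> hI w e j x = 0}"
definition PI' where "PI' w e s x = {j. j < s \<and> hI w e j x > 0}"

text \<open>Rows of U_Z are indexed by Inl i (i in Z_E, row v_i^t) and Inr j (j in Z_I, row w_j^t).\<close>
definition Zset where "Zset v d r w e s x = Inl ` ZE v d r x \<union> Inr ` ZI w e s x"

fun urow :: "(nat \<Rightarrow> real^'n) \<Rightarrow> (nat \<Rightarrow> real^'n) \<Rightarrow> nat + nat \<Rightarrow> real^'n" where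
  "urow v w (Inl i) = v i"
| "urow v w (Inr j) = w j"

definition ubar where
  "ubar v d r w e s x = - (\<Sum>i\<in>NE v d r x. v i) + (\<Sum>i\<in>PE v d r x. v i) + (\<Sum>j\<in>PI' w e s x. w j)"

definition Ginv where
  "Ginv f v d r w e s x = (let Hi = matrix_inv (hess f x); Z = Zset v d r w e s x in
     inv_on Z (\<lambda>a b. (urow v w a v* Hi) \<bullet> urow v w b))"

definition Pmat :: "(real^'n::finite \<Rightarrow> real) \<Rightarrow> (nat \<Rightarrow> real^'n) \<Rightarrow> (nat \<Rightarrow> real) \<Rightarrow> nat
    \<Rightarrow> (nat \<Rightarrow> real^'n) \<Rightarrow> (nat \<Rightarrow> real) \<Rightarrow> nat \<Rightarrow> real^'n \<Rightarrow> 'n \<Rightarrow> 'n \<Rightarrow> real" where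
  "Pmat f v d r w e s x = (let Hi = matrix_inv (hess f x); Z = Zset v d r w e s x;
     G = Ginv f v d r w e s x in
     (\<lambda>i j. Hi $ i $ j - (\<Sum>a\<in>Z. \<Sum>b\<in>Z. (Hi *v urow v w a) $ i * G a b * (urow v w b v* Hi) $ j)))"

definition Qmat :: "(real^'n::finite \<Rightarrow> real) \<Rightarrow> (nat \<Rightarrow> real^'n) \<Rightarrow> (nat \<Rightarrow> real) \<Rightarrow> nat
    \<Rightarrow> (nat \<Rightarrow> real^'n) \<Rightarrow> (nat \<Rightarrow> real) \<Rightarrow> nat \<Rightarrow> real^'n \<Rightarrow> 'n \<Rightarrow> nat + nat \<Rightarrow> real" where
  "Qmat f v d r w e s x = (let Hi = matrix_inv (hess f x); Z = Zset v d r w e s x;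
     G = Ginv f v d r w e s x in
     (\<lambda>i a. \<Sum>b\<in>Z. (Hi *v urow v w b) $ i * G b a))"

definition Rmat :: "(real^'n::finite \<Rightarrow> real) \<Rightarrow> (nat \<Rightarrow> real^'n) \<Rightarrow> (nat \<Rightarrow> real) \<Rightarrow> nat
    \<Rightarrow> (nat \<Rightarrow> real^'n) \<Rightarrow> (nat \<Rightarrow> real) \<Rightarrow> nat \<Rightarrow> real^'n \<Rightarrow> nat + nat \<Rightarrow> nat + nat \<Rightarrow> real" where
  "Rmat f v d r w e s x = (\<lambda>a b. - Ginv f v d r w e s x a b)"

end

theory Submission
  imports Defs
begin

text \<open>
  Let \<open>K = {z. U\<^sub>\<Z> z = 0}\<close>.  Because the index sets are constant, \<open>x(t) - x(\<rho>) \<in> K\<close> and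
  minimality gives the stationarity condition \<open>z \<bullet> (\<nabla>f(x(t)) + t u\<^sub>\<bar>\<Z>\<^sub>) = 0\<close> for \<open>z \<in> K\<close>.
  Columns of \<open>P(x)\<close> and \<open>Q(x)\<close> are characterised as solutions of constrained linear systems
  \<open>y \<in> y\<^sub>0 + K\<close>, \<open>z \<bullet> H y = z \<bullet> b\<close> (\<open>z \<in> K\<close>), and \<open>R = - Q\<^sup>t H Q\<close>.  A perturbation estimate
  based on the coercivity of \<open>H\<close> on \<open>K\<close> shows that such solutions are differentiable whenever
  the data are; this yields first \<open>x' = - P u\<^sub>\<bar>\<Z>\<^sub>\<close>, then \<open>dH/dt = D\<^bold>H(x) x'\<close> by the chain rule,
  and finally \<open>dP/dt = - P (dH/dt) P\<close>, \<open>dQ/dt = - P (dH/dt) Q\<close>, \<open>dR/dt = - Q\<^sup>t (dH/dt) Q\<close>,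
  which are the stated formulas written with \<open>vec\<close> and Kronecker products.
\<close>

section \<open>Calculus for functions on \<open>\<real>\<^sup>p\<close>\<close>

lemma frechet_derivative_partials:
  fixes G :: "real^'n::finite \<Rightarrow> real"
  assumes "G differentiable at p"
  shows "frechet_derivative G (at p) h = (\<Sum>m\<in>UNIV. h$m * partial m G p)"
proof -
  have lin: "linear (frechet_derivative G (at p))"
    using linear_frechet_derivative[OF assms] .
  have "frechet_derivative G (at p) h = frechet_derivative G (at p) (\<Sum>m\<in>UNIV. h$m *\<^sub>R axis m 1)"
    using basis_expansion[of h] by (simp add: scalar_mult_eq_scaleR)
  also have "\<dots> = (\<Sum>m\<in>UNIV. h$m * frechet_derivative G (at p) (axis m 1))"
    by (simp add: linear_sum[OF lin] linear_scale[OF lin])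
  finally show ?thesis by (simp add: partial_def)
qed

lemma has_real_derivative_along_line:
  fixes G :: "real^'n::finite \<Rightarrow> real"
  assumes "G differentiable at (p + s *\<^sub>R q)"
  shows "((\<lambda>s. G (p + s *\<^sub>R q)) has_real_derivative frechet_derivative G (at (p + s *\<^sub>R q)) q) (at s)"
proof -
  let ?D = "frechet_derivative G (at (p + s *\<^sub>R q))"
  have line: "((\<lambda>s. p + s *\<^sub>R q) has_derivative (\<lambda>h. h *\<^sub>R q)) (at s)"
    by (auto intro!: derivative_eq_intros)
  have "(G has_derivative ?D) (at (p + s *\<^sub>R q))"
    using frechet_derivative_works assms by blast
  from diff_chain_at[OF line this]
  have "((G \<circ> (\<lambda>s. p + s *\<^sub>R q)) has_derivative (?D \<circ> (\<lambda>h. h *\<^sub>R q))) (at s)" .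
  moreover have "?D \<circ> (\<lambda>h. h *\<^sub>R q) = (*) (?D q)"
    using linear_frechet_derivative[OF assms] by (auto simp: linear_scale o_def)
  ultimately show ?thesis by (simp add: has_field_derivative_def o_def)
qed

definition second_difference :: "(real^'n::finite \<Rightarrow> real) \<Rightarrow> real^'n \<Rightarrow> 'n \<Rightarrow> 'n \<Rightarrow> real \<Rightarrow> real" where
  "second_difference F x i j h =
     F (x + h *\<^sub>R axis j 1 + h *\<^sub>R axis i 1) - F (x + h *\<^sub>R axis j 1) - F (x + h *\<^sub>R axis i 1) + F x"

lemma second_difference_commute: "second_difference F x i j h = second_difference F x j i h"
  unfolding second_difference_def by (simp add: algebra_simps)

lemma second_difference_mean_value:
  fixes F :: "real^'n::finite \<Rightarrow> real"
  assumes dF: "\<forall>y. F differentiable at y" and h: "0 < h"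
  obtains \<xi> where "0 < \<xi>" "\<xi> < h" "second_difference F x i j h =
      h * (partial i F (x + h *\<^sub>R axis j 1 + \<xi> *\<^sub>R axis i 1) - partial i F (x + \<xi> *\<^sub>R axis i 1))"
proof -
  define \<alpha> where "\<alpha> s = F (x + h *\<^sub>R axis j 1 + s *\<^sub>R axis i 1) - F (x + s *\<^sub>R axis i 1)" for s
  define \<alpha>' where "\<alpha>' s = partial i F (x + h *\<^sub>R axis j 1 + s *\<^sub>R axis i 1) - partial i F (x + s *\<^sub>R axis i 1)" for s
  have "(\<alpha> has_real_derivative \<alpha>' s) (at s)" for s
    unfolding \<alpha>_def \<alpha>'_def partial_def
    by (intro DERIV_diff has_real_derivative_along_line) (use dF in auto)
  then obtain \<xi> where "0 < \<xi>" "\<xi> < h" "\<alpha> h - \<alpha> 0 = (h - 0) * \<alpha>' \<xi>"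
    using MVT2[of 0 h \<alpha> \<alpha>'] h by blast
  then show ?thesis
    by (intro that[of \<xi>]) (simp_all add: \<alpha>_def \<alpha>'_def second_difference_def)
qed

lemma second_difference_approx:
  fixes F :: "real^'n::finite \<Rightarrow> real"
  assumes dF: "\<forall>y. F differentiable at y" and dP: "partial i F differentiable at x"
    and e: "e > 0"
  shows "\<exists>\<delta>>0. \<forall>h. 0 < h \<and> h < \<delta> \<longrightarrow>
     \<bar>second_difference F x i j h - h^2 * partial j (partial i F) x\<bar> \<le> 3 * e * h^2"
proof -
  define D where "D = frechet_derivative (partial i F) (at x)"
  have linD: "linear D" unfolding D_def using linear_frechet_derivative dP by blast
  have "(partial i F has_derivative D) (at x)"
    unfolding D_def using frechet_derivative_works dP by blast
  then obtain \<delta> where \<delta>: "\<delta> > 0" and approx: "\<And>y. norm (y - x) < \<delta> \<Longrightarrow>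
      \<bar>partial i F y - partial i F x - D (y - x)\<bar> \<le> e * norm (y - x)"
    using e unfolding has_derivative_at_alt by force
  show ?thesis
  proof (intro exI[of _ "\<delta>/2"] conjI allI impI)
    show "\<delta>/2 > 0" using \<delta> by simp
    fix h :: real assume h: "0 < h \<and> h < \<delta>/2"
    obtain \<xi> where \<xi>: "0 < \<xi>" "\<xi> < h" and mv: "second_difference F x i j h =
        h * (partial i F (x + h *\<^sub>R axis j 1 + \<xi> *\<^sub>R axis i 1) - partial i F (x + \<xi> *\<^sub>R axis i 1))"
      using second_difference_mean_value[OF dF] h by metis
    define a :: "real^'n" where "a = h *\<^sub>R axis j 1 + \<xi> *\<^sub>R axis i 1"
    define b :: "real^'n" where "b = \<xi> *\<^sub>R axis i 1"
    have na: "norm a \<le> 2*h"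
      using norm_triangle_ineq[of "h *\<^sub>R axis j 1" "\<xi> *\<^sub>R axis i 1 :: real^'n"] \<xi> h
      by (simp add: a_def)
    have nb: "norm b \<le> h" using \<xi> by (simp add: b_def)
    have "\<bar>partial i F (x + a) - partial i F x - D a\<bar> \<le> e * norm a"
      using approx[of "x + a"] na h by simp
    also have "\<dots> \<le> e * (2*h)" using na e by simp
    finally have ba: "\<bar>partial i F (x + a) - partial i F x - D a\<bar> \<le> e * (2*h)" .
    have "\<bar>partial i F (x + b) - partial i F x - D b\<bar> \<le> e * norm b"
      using approx[of "x + b"] nb h by simp
    also have "\<dots> \<le> e * h" using nb e by simp
    finally have bb: "\<bar>partial i F (x + b) - partial i F x - D b\<bar> \<le> e * h" .
    have "D a - D b = h * partial j (partial i F) x"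
      by (simp add: a_def b_def linear_add[OF linD] linear_scale[OF linD]) (simp add: D_def partial_def)
    then have "\<bar>(partial i F (x + a) - partial i F (x + b)) - h * partial j (partial i F) x\<bar> \<le> 3 * e * h"
      using ba bb by linarith
    then have "h * \<bar>(partial i F (x + a) - partial i F (x + b)) - h * partial j (partial i F) x\<bar> \<le> h * (3 * e * h)"
      using h by (intro mult_left_mono) auto
    moreover have "second_difference F x i j h - h^2 * partial j (partial i F) x
        = h * ((partial i F (x + a) - partial i F (x + b)) - h * partial j (partial i F) x)"
      unfolding mv a_def b_def by (simp add: power2_eq_square algebra_simps)
    ultimately show "\<bar>second_difference F x i j h - h^2 * partial j (partial i F) x\<bar> \<le> 3 * e * h^2"
      using h by (simp add: abs_mult power2_eq_square mult_ac)
  qed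
qed

lemma partial_partial_commute:
  fixes F :: "real^'n::finite \<Rightarrow> real"
  assumes dF: "\<forall>y. F differentiable at y" and dP: "\<forall>i y. partial i F differentiable at y"
  shows "partial j (partial i F) x = partial i (partial j F) x"
proof (rule ccontr)
  let ?a = "partial j (partial i F) x" and ?b = "partial i (partial j F) x"
  assume ne: "?a \<noteq> ?b"
  define e where "e = \<bar>?a - ?b\<bar> / 12"
  have e: "e > 0" using ne by (simp add: e_def)
  obtain \<delta>1 where \<delta>1: "\<delta>1 > 0" "\<forall>h. 0 < h \<and> h < \<delta>1 \<longrightarrow>
      \<bar>second_difference F x i j h - h^2 * ?a\<bar> \<le> 3 * e * h^2"
    using second_difference_approx[OF dF _ e] dP by blast
  obtain \<delta>2 where \<delta>2: "\<delta>2 > 0" "\<forall>h. 0 < h \<and> h < \<delta>2 \<longrightarrow>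
      \<bar>second_difference F x j i h - h^2 * ?b\<bar> \<le> 3 * e * h^2"
    using second_difference_approx[OF dF _ e] dP by blast
  define h where "h = min \<delta>1 \<delta>2 / 2"
  have h: "0 < h" "h < \<delta>1" "h < \<delta>2" using \<delta>1 \<delta>2 by (auto simp: h_def)
  define \<Delta> where "\<Delta> = second_difference F x i j h"
  have qa: "\<bar>\<Delta> - h^2 * ?a\<bar> \<le> 3 * e * h^2"
    unfolding \<Delta>_def using \<delta>1(2) h by blast
  have qb: "\<bar>\<Delta> - h^2 * ?b\<bar> \<le> 3 * e * h^2"
    unfolding \<Delta>_def second_difference_commute[of F x i j] using \<delta>2(2) h by blast
  have "(\<Delta> - h^2 * ?b) - (\<Delta> - h^2 * ?a) = h^2 * (?a - ?b)" by (simp add: algebra_simps)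
  then have "h^2 * \<bar>?a - ?b\<bar> = \<bar>(\<Delta> - h^2 * ?b) - (\<Delta> - h^2 * ?a)\<bar>"
    by (simp add: abs_mult)
  also have "\<dots> \<le> 6 * e * h^2" using qa qb by linarith
  finally have "h^2 * \<bar>?a - ?b\<bar> \<le> 6 * e * h^2" .
  then have "\<bar>?a - ?b\<bar> \<le> 6 * e" using h by (simp add: mult.commute)
  then show False using e ne unfolding e_def by simp
qed

lemma C3_differentiable:
  assumes "C3 f"
  shows "\<forall>y. f differentiable at y" "\<forall>i y. partial i f differentiable at y"
    "\<forall>i j y. partial j (partial i f) differentiable at y"
  using assms unfolding C3_def by auto

lemma hess_sym:
  assumes "C3 f" shows "hess f y $ i $ j = hess f y $ j $ i"
  using partial_partial_commute[OF C3_differentiable(1,2)[OF assms]] by (simp add: hess_def)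

lemma hess_transpose:
  assumes "C3 f" shows "transpose (hess f y) = hess f y"
  using hess_sym[OF assms] by (simp add: transpose_def vec_eq_iff)

definition gradient :: "(real^'n::finite \<Rightarrow> real) \<Rightarrow> real^'n \<Rightarrow> real^'n" where
  "gradient f y = (\<chi> i. partial i f y)"

lemma frechet_derivative_gradient:
  assumes "C3 f" shows "frechet_derivative f (at y) z = z \<bullet> gradient f y"
  using frechet_derivative_partials[of f y z] C3_differentiable(1)[OF assms]
  by (simp add: inner_vec_def gradient_def)

lemma gradient_has_derivative:
  fixes f :: "real^'n::finite \<Rightarrow> real"
  assumes "C3 f"
  shows "(gradient f has_derivative (\<lambda>h. hess f y *v h)) (at y)"
proof (rule has_derivative_componentwise_within[THEN iffD2], rule ballI)
  fix b :: "real^'n" assume "b \<in> Basis"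
  then obtain k where b: "b = axis k 1" unfolding Basis_vec_def by auto
  have "(partial k f has_derivative frechet_derivative (partial k f) (at y)) (at y)"
    using frechet_derivative_works C3_differentiable(2)[OF assms] by blast
  moreover have "(\<lambda>x. gradient f x \<bullet> b) = partial k f"
    by (simp add: b gradient_def fun_eq_iff flip: cart_eq_inner_axis)
  moreover have "(\<lambda>h. (hess f y *v h) \<bullet> b) = frechet_derivative (partial k f) (at y)"
  proof
    fix h
    have "(hess f y *v h) \<bullet> b = (\<Sum>m\<in>UNIV. hess f y $ m $ k * h $ m)"
      by (simp add: b matrix_vector_mult_def hess_sym[OF assms, of y k] flip: cart_eq_inner_axis)
    also have "\<dots> = frechet_derivative (partial k f) (at y) h"
      using frechet_derivative_partials[of "partial k f" y h] C3_differentiable(2)[OF assms]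
      by (simp add: hess_def mult.commute)
    finally show "(hess f y *v h) \<bullet> b = frechet_derivative (partial k f) (at y) h" .
  qed
  ultimately show "((\<lambda>x. gradient f x \<bullet> b) has_derivative (\<lambda>h. (hess f y *v h) \<bullet> b)) (at y within UNIV)"
    by simp
qed

section \<open>Positive definite matrices\<close>

lemma pd_matrix_inv:
  fixes H :: "real^'n::finite^'n"
  assumes pd: "\<forall>z. z \<noteq> 0 \<longrightarrow> z \<bullet> (H *v z) > 0"
  shows "H ** matrix_inv H = mat 1" "matrix_inv H ** H = mat 1"
proof -
  have "inj ((*v) H)"
  proof (rule injI)
    fix x y assume "H *v x = H *v y"
    then have "H *v (x - y) = 0" by (simp add: matrix_vector_mult_diff_distrib)
    then show "x = y" using pd[rule_format, of "x - y"] by auto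
  qed
  then obtain B where "B ** H = mat 1" using matrix_left_invertible_injective by blast
  then have "invertible H" using invertible_left_inverse by blast
  then have "H ** matrix_inv H = mat 1 \<and> matrix_inv H ** H = mat 1"
    unfolding invertible_def matrix_inv_def by (rule someI_ex)
  then show "H ** matrix_inv H = mat 1" "matrix_inv H ** H = mat 1" by auto
qed

lemma transpose_inverse_symmetric:
  fixes H :: "real^'n::finite^'n"
  assumes "transpose H = H" "H ** Hi = mat 1" "Hi ** H = mat 1"
  shows "transpose Hi = Hi"
proof -
  have "transpose Hi ** H = mat 1"
    by (metis assms(1,2) matrix_transpose_mul transpose_mat)
  then have "transpose Hi = (transpose Hi ** H) ** Hi"
    by (metis assms(2) matrix_mul_assoc matrix_mul_rid)
  with \<open>transpose Hi ** H = mat 1\<close> show ?thesis by simp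
qed

lemma pd_matrix_inv_pd:
  fixes H :: "real^'n::finite^'n"
  assumes pd: "\<forall>z. z \<noteq> 0 \<longrightarrow> z \<bullet> (H *v z) > 0" and z: "z \<noteq> 0"
  shows "z \<bullet> (matrix_inv H *v z) > 0"
proof -
  define q where "q = matrix_inv H *v z"
  have zq: "z = H *v q" unfolding q_def by (simp add: matrix_vector_mul_assoc pd_matrix_inv(1)[OF pd])
  then have "q \<noteq> 0" using z by auto
  then have "q \<bullet> (H *v q) > 0" using pd by blast
  moreover have "z \<bullet> (matrix_inv H *v z) = q \<bullet> (H *v q)"
  proof -
    have "z \<bullet> (matrix_inv H *v z) = z \<bullet> q" unfolding q_def ..
    also have "\<dots> = (H *v q) \<bullet> q" using zq by simp
    finally show ?thesis by (simp add: inner_commute)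
  qed
  ultimately show ?thesis by simp
qed

text \<open>Positive definiteness is uniform: the quadratic form is bounded below by a
  positive multiple of \<open>\<parallel>z\<parallel>\<^sup>2\<close> (minimum of the form on the unit sphere).\<close>
lemma pd_coercive:
  fixes H :: "real^'n::finite^'n"
  assumes pd: "\<forall>z. z \<noteq> 0 \<longrightarrow> z \<bullet> (H *v z) > 0"
  obtains c where "c > 0" "\<forall>z. c * (norm z)^2 \<le> z \<bullet> (H *v z)"
proof -
  have "axis undefined 1 \<in> sphere (0::real^'n) 1" by simp
  then have ne: "sphere (0::real^'n) 1 \<noteq> {}" by blast
  have "continuous_on (sphere 0 1) (\<lambda>z::real^'n. z \<bullet> (H *v z))"
    by (intro continuous_intros)
  then obtain z0 where z0: "z0 \<in> sphere 0 1" and min: "\<forall>y\<in>sphere 0 1. z0 \<bullet> (H *v z0) \<le> y \<bullet> (H *v y)"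
    using continuous_attains_inf[OF compact_sphere ne] by blast
  define c where "c = z0 \<bullet> (H *v z0)"
  have "z0 \<noteq> 0" using z0 by auto
  then have c: "c > 0" using pd unfolding c_def by blast
  have "c * (norm z)^2 \<le> z \<bullet> (H *v z)" for z
  proof (cases "z = 0")
    case False
    define u where "u = (1 / norm z) *\<^sub>R z"
    have "u \<in> sphere 0 1" using False by (simp add: u_def)
    then have "c \<le> u \<bullet> (H *v u)" using min unfolding c_def by blast
    moreover have "z \<bullet> (H *v z) = (norm z)^2 * (u \<bullet> (H *v u))"
      using False by (simp add: u_def matrix_vector_mult_scaleR power2_eq_square)
    moreover have "c * (norm z)^2 \<le> (u \<bullet> (H *v u)) * (norm z)^2"
      using \<open>c \<le> u \<bullet> (H *v u)\<close> by (rule mult_right_mono) simp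
    ultimately show ?thesis by (simp add: mult.commute)
  qed simp
  with c that show ?thesis by blast
qed

lemma bilinear_form_entry_bound:
  fixes A :: "real^'n::finite^'m::finite"
  assumes "\<And>i j. \<bar>A$i$j\<bar> \<le> B"
  shows "\<bar>z \<bullet> (A *v w)\<bar> \<le> real CARD('m) * real CARD('n) * B * norm z * norm w"
proof -
  have "\<bar>z \<bullet> (A *v w)\<bar> \<le> norm z * norm (A *v w)" by (rule Cauchy_Schwarz_ineq2)
  also have "norm (A *v w) \<le> onorm ((*v) A) * norm w"
    by (rule onorm) simp
  also have "onorm ((*v) A) \<le> real CARD('m) * real CARD('n) * B"
    by (rule onorm_le_matrix_component) (rule assms)
  finally show ?thesis
    by (simp add: mult_ac mult_left_mono mult_right_mono)
qed

section \<open>Inverses of positive definite matrices indexed by a finite set\<close>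

definition is_inv_on :: "'a set \<Rightarrow> ('a \<Rightarrow> 'a \<Rightarrow> real) \<Rightarrow> ('a \<Rightarrow> 'a \<Rightarrow> real) \<Rightarrow> bool" where
  "is_inv_on S A B \<longleftrightarrow> (\<forall>i j. (i \<notin> S \<or> j \<notin> S) \<longrightarrow> B i j = 0)
      \<and> (\<forall>i\<in>S. \<forall>j\<in>S. (\<Sum>k\<in>S. A i k * B k j) = (if i = j then 1 else 0))"

definition pd_on :: "'a set \<Rightarrow> ('a \<Rightarrow> 'a \<Rightarrow> real) \<Rightarrow> bool" where
  "pd_on S A \<longleftrightarrow> (\<forall>c. (\<exists>a\<in>S. c a \<noteq> 0) \<longrightarrow> (\<Sum>a\<in>S. \<Sum>b\<in>S. c a * A a b * c b) > 0)"

text \<open>To invert a matrix indexed by a finite set \<open>S\<close>, we transport it along an injection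
  \<open>\<iota> : S \<rightarrow> 'n\<close> and complete it by the identity to an \<open>'n \<times> 'n\<close> matrix.\<close>
definition embed_matrix :: "'a set \<Rightarrow> ('a \<Rightarrow> 'n::finite) \<Rightarrow> ('a \<Rightarrow> 'a \<Rightarrow> real) \<Rightarrow> real^'n^'n" where
  "embed_matrix S \<iota> A = (\<chi> p q. if p \<in> \<iota> ` S \<and> q \<in> \<iota> ` S
      then A (the_inv_into S \<iota> p) (the_inv_into S \<iota> q) else if p = q then 1 else 0)"

lemma embed_matrix_entry:
  "inj_on \<iota> S \<Longrightarrow> a \<in> S \<Longrightarrow> b \<in> S \<Longrightarrow> embed_matrix S \<iota> A $ \<iota> a $ \<iota> b = A a b"
  by (simp add: embed_matrix_def the_inv_into_f_f)

lemma embed_matrix_quadratic_form: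
  fixes \<iota> :: "'a \<Rightarrow> 'n::finite"
  assumes \<iota>: "inj_on \<iota> S"
  shows "z \<bullet> (embed_matrix S \<iota> A *v z)
      = (\<Sum>a\<in>S. \<Sum>b\<in>S. z$(\<iota> a) * A a b * z$(\<iota> b)) + (\<Sum>p\<in>-(\<iota> ` S). (z$p)^2)"
proof -
  let ?M = "embed_matrix S \<iota> A" and ?T = "\<iota> ` S"
  have row_T: "(\<Sum>q\<in>UNIV. z$p * ?M$p$q * z$q) = (\<Sum>q\<in>?T. z$p * ?M$p$q * z$q)" if "p \<in> ?T" for p
    by (rule sum.mono_neutral_right) (use that in \<open>auto simp: embed_matrix_def\<close>)
  have row_nT: "(\<Sum>q\<in>UNIV. z$p * ?M$p$q * z$q) = (z$p)^2" if "p \<in> -?T" for p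
  proof -
    have "(\<Sum>q\<in>UNIV. z$p * ?M$p$q * z$q) = (\<Sum>q\<in>UNIV. if q = p then z$p * z$p else 0)"
      by (rule sum.cong) (use that in \<open>auto simp: embed_matrix_def\<close>)
    then show ?thesis by (simp add: power2_eq_square)
  qed
  have "z \<bullet> (?M *v z) = (\<Sum>p\<in>UNIV. \<Sum>q\<in>UNIV. z$p * ?M$p$q * z$q)"
    by (simp add: inner_vec_def matrix_vector_mult_def sum_distrib_left mult_ac)
  also have "\<dots> = (\<Sum>p\<in>?T. \<Sum>q\<in>UNIV. z$p * ?M$p$q * z$q) + (\<Sum>p\<in>-?T. \<Sum>q\<in>UNIV. z$p * ?M$p$q * z$q)"
    using sum.subset_diff[of ?T UNIV] by (simp add: Compl_eq_Diff_UNIV add.commute)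
  also have "\<dots> = (\<Sum>p\<in>?T. \<Sum>q\<in>?T. z$p * ?M$p$q * z$q) + (\<Sum>p\<in>-?T. (z$p)^2)"
    using row_T row_nT by simp
  also have "(\<Sum>p\<in>?T. \<Sum>q\<in>?T. z$p * ?M$p$q * z$q) = (\<Sum>a\<in>S. \<Sum>b\<in>S. z$(\<iota> a) * A a b * z$(\<iota> b))"
    using \<iota> by (simp add: sum.reindex embed_matrix_entry)
  finally show ?thesis .
qed

text \<open>If \<open>A\<close> is positive definite on \<open>S\<close>, so is the completed matrix; in particular it is injective.\<close>
lemma embed_matrix_injective:
  fixes \<iota> :: "'a \<Rightarrow> 'n::finite"
  assumes \<iota>: "inj_on \<iota> S" and pd: "pd_on S A"
  shows "inj ((*v) (embed_matrix S \<iota> A))"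
proof (rule injI)
  fix x y assume "embed_matrix S \<iota> A *v x = embed_matrix S \<iota> A *v y"
  then have "embed_matrix S \<iota> A *v (x - y) = 0" by (simp add: matrix_vector_mult_diff_distrib)
  then have Q0: "(\<Sum>a\<in>S. \<Sum>b\<in>S. (x - y)$(\<iota> a) * A a b * (x - y)$(\<iota> b)) + (\<Sum>p\<in>-(\<iota> ` S). ((x - y)$p)^2) = 0"
    using embed_matrix_quadratic_form[OF \<iota>, of "x - y" A] by simp
  have squares: "(\<Sum>p\<in>-(\<iota> ` S). ((x - y)$p)^2) \<ge> 0" by (intro sum_nonneg) auto
  have on_S: "\<forall>a\<in>S. (x - y)$(\<iota> a) = 0"
  proof (rule ccontr)
    assume "\<not> (\<forall>a\<in>S. (x - y)$(\<iota> a) = 0)"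
    then have "(\<Sum>a\<in>S. \<Sum>b\<in>S. (x - y)$(\<iota> a) * A a b * (x - y)$(\<iota> b)) > 0"
      using pd unfolding pd_on_def by (elim allE[of _ "\<lambda>a. (x - y)$(\<iota> a)"]) blast
    with Q0 squares show False by linarith
  qed
  then have "(\<Sum>p\<in>-(\<iota> ` S). ((x - y)$p)^2) = 0" using Q0 by simp
  then have "\<forall>p\<in>-(\<iota> ` S). (x - y)$p = 0" by (subst (asm) sum_nonneg_eq_0_iff) auto
  with on_S have "\<forall>p. (x - y)$p = 0" by blast
  then show "x = y" by (simp add: vec_eq_iff)
qed

text \<open>Existence of the inverse on \<open>S\<close>, read off from the inverse of the completed matrix.\<close>
lemma pd_on_inverse_exists:
  fixes A :: "'a \<Rightarrow> 'a \<Rightarrow> real"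
  assumes fin: "finite S" and card: "card S \<le> CARD('n::finite)" and pd: "pd_on S A"
  shows "\<exists>B. is_inv_on S A B"
proof -
  obtain \<iota> :: "'a \<Rightarrow> 'n" where \<iota>: "inj_on \<iota> S"
    using card_le_inj[of S "UNIV::'n set"] fin card by auto
  define M where "M = embed_matrix S \<iota> A"
  obtain B0 where "B0 ** M = mat 1"
    using matrix_left_invertible_injective embed_matrix_injective[OF \<iota> pd] unfolding M_def by blast
  then have MB: "M ** B0 = mat 1" using matrix_left_right_inverse by blast
  define B where "B = (\<lambda>a b. if a \<in> S \<and> b \<in> S then B0 $ (\<iota> a) $ (\<iota> b) else 0)"
  have outside: "\<forall>i j. (i \<notin> S \<or> j \<notin> S) \<longrightarrow> B i j = 0" by (simp add: B_def)
  have inverse: "(\<Sum>k\<in>S. A i k * B k j) = (if i = j then 1 else 0)" if i: "i \<in> S" and j: "j \<in> S" for i j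
  proof -
    have "(\<Sum>k\<in>S. A i k * B k j) = (\<Sum>k\<in>S. M $ (\<iota> i) $ (\<iota> k) * B0 $ (\<iota> k) $ (\<iota> j))"
      by (rule sum.cong) (simp_all add: B_def M_def embed_matrix_entry[OF \<iota>] i j)
    also have "\<dots> = (\<Sum>q\<in>\<iota> ` S. M $ (\<iota> i) $ q * B0 $ q $ (\<iota> j))"
      using \<iota> by (simp add: sum.reindex)
    also have "\<dots> = (M ** B0) $ (\<iota> i) $ (\<iota> j)"
      by (subst sum.mono_neutral_left[of UNIV "\<iota> ` S"]) (auto simp: M_def embed_matrix_def i matrix_matrix_mult_def)
    also have "\<dots> = (if i = j then 1 else 0)" using MB \<iota> i j by (simp add: mat_def inj_on_eq_iff)
    finally show ?thesis .
  qed
  show ?thesis unfolding is_inv_on_def using outside inverse by blast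
qed

lemma inv_on_is_inv_on:
  fixes A :: "'a \<Rightarrow> 'a \<Rightarrow> real"
  assumes fin: "finite S" and card: "card S \<le> CARD('n::finite)" and pd: "pd_on S A"
  shows "is_inv_on S A (inv_on S A)"
proof -
  have unique: "B2 = B" if B: "is_inv_on S A B" and B2: "is_inv_on S A B2" for B B2
  proof (intro ext)
    fix i j
    show "B2 i j = B i j"
    proof (cases "i \<in> S \<and> j \<in> S")
      case False then show ?thesis using B B2 by (auto simp: is_inv_on_def)
    next
      case True
      define c where "c k = B2 k j - B k j" for k
      have "(\<Sum>b\<in>S. A a b * c b) = 0" if "a \<in> S" for a
        using B B2 True that by (simp add: is_inv_on_def c_def right_diff_distrib sum_subtractf)
      then have "(\<Sum>a\<in>S. \<Sum>b\<in>S. c a * A a b * c b) = 0"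
        by (simp add: mult.assoc flip: sum_distrib_left)
      then have "\<forall>a\<in>S. c a = 0" using pd unfolding pd_on_def by force
      then show ?thesis using True by (simp add: c_def)
    qed
  qed
  have "\<exists>!B. is_inv_on S A B"
    using pd_on_inverse_exists[OF fin card pd] unique by blast
  then show ?thesis
    unfolding inv_on_def is_inv_on_def[abs_def] by (rule theI')
qed

section \<open>The matrices \<open>P\<close>, \<open>Q\<close>, \<open>R\<close> for a fixed Hessian and active set\<close>

text \<open>The definitions of \<open>Ginv\<close>, \<open>Pmat\<close>, \<open>Qmat\<close> evaluate \<open>H = d\<^sup>2f(x)\<close> and the active set
  \<open>\<Z>\<close> at the same point \<open>x\<close>.  We separate the two: \<open>S\<close> is a finite index set and \<open>U a\<close> the
  row of \<open>U\<^sub>\<Z>\<close> with index \<open>a \<in> S\<close>.\<close>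
definition gram_inv :: "real^'n::finite^'n \<Rightarrow> 'a set \<Rightarrow> ('a \<Rightarrow> real^'n) \<Rightarrow> 'a \<Rightarrow> 'a \<Rightarrow> real" where
  "gram_inv H S U = inv_on S (\<lambda>a b. (U a v* matrix_inv H) \<bullet> U b)"

definition proj_P :: "real^'n::finite^'n \<Rightarrow> 'a set \<Rightarrow> ('a \<Rightarrow> real^'n) \<Rightarrow> 'n \<Rightarrow> 'n \<Rightarrow> real" where
  "proj_P H S U = (\<lambda>i j. matrix_inv H $ i $ j - (\<Sum>a\<in>S. \<Sum>b\<in>S.
      (matrix_inv H *v U a) $ i * gram_inv H S U a b * (U b v* matrix_inv H) $ j))"

definition proj_Q :: "real^'n::finite^'n \<Rightarrow> 'a set \<Rightarrow> ('a \<Rightarrow> real^'n) \<Rightarrow> 'n \<Rightarrow> 'a \<Rightarrow> real" where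
  "proj_Q H S U = (\<lambda>i a. \<Sum>b\<in>S. (matrix_inv H *v U b) $ i * gram_inv H S U b a)"

definition null_rows :: "'a set \<Rightarrow> ('a \<Rightarrow> real^'n::finite) \<Rightarrow> (real^'n) set" where
  "null_rows S U = {z. \<forall>a\<in>S. U a \<bullet> z = 0}"

lemma subspace_null_rows: "subspace (null_rows S U)"
  unfolding subspace_def null_rows_def by (simp add: inner_add_right)

lemma matrix_vector_mult_sum: "(A::real^'n::finite^'m::finite) *v (\<Sum>i\<in>S. f i) = (\<Sum>i\<in>S. A *v f i)"
  using linear_sum[OF matrix_vector_mul_linear[of A]] by simp

lemma sum_bilinear_form: "(\<Sum>k\<in>UNIV. \<Sum>l\<in>UNIV. p $ k * (A::real^'n::finite^'n) $ k $ l * q $ l) = p \<bullet> (A *v q)"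
  by (simp add: inner_vec_def matrix_vector_mult_def sum_distrib_left mult_ac)

locale active_system =
  fixes H :: "real^'n::finite^'n" and S :: "'a set" and U :: "'a \<Rightarrow> real^'n"
  assumes sym_H: "transpose H = H"
    and pd_H: "\<forall>z. z \<noteq> 0 \<longrightarrow> z \<bullet> (H *v z) > 0"
    and finite_S: "finite S" and inj_U: "inj_on U S" and independent_U: "independent (U ` S)"
begin

abbreviation "Hi \<equiv> matrix_inv H"
abbreviation "G \<equiv> gram_inv H S U"
abbreviation "P \<equiv> proj_P H S U"
abbreviation "Q \<equiv> proj_Q H S U"
abbreviation "K \<equiv> null_rows S U"

definition "N a = Hi *v U a"
definition "gram a b = (U a v* Hi) \<bullet> U b"

lemma H_Hi: "H ** Hi = mat 1"
  using pd_matrix_inv(1)[OF pd_H] .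

lemma symmetric_Hi: "transpose Hi = Hi"
  using transpose_inverse_symmetric[OF sym_H pd_matrix_inv[OF pd_H]] .

lemma vector_mult_Hi: "y v* Hi = Hi *v y"
  by (metis symmetric_Hi transpose_matrix_vector)

lemma gram_N: "gram a b = U a \<bullet> N b"
  unfolding gram_def N_def by (simp add: dot_lmul_matrix)

lemma gram_sym: "gram a b = gram b a"
  unfolding gram_def by (metis vector_mult_Hi dot_lmul_matrix inner_commute)

lemma H_N: "H *v N a = U a"
  unfolding N_def by (simp add: matrix_vector_mul_assoc H_Hi)

lemma card_S: "card S \<le> CARD('n)"
  using independent_bound[OF independent_U] card_image[OF inj_U] by simp

text \<open>Independence of the rows makes the Gram matrix positive definite.\<close>
lemma gram_pd: "pd_on S gram"
  unfolding pd_on_def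
proof (intro allI impI)
  fix c :: "'a \<Rightarrow> real" assume c: "\<exists>a\<in>S. c a \<noteq> 0"
  define y where "y = (\<Sum>a\<in>S. c a *\<^sub>R U a)"
  have "y \<noteq> 0"
  proof
    assume y0: "y = 0"
    define u where "u v = c (the_inv_into S U v)" for v
    have "(\<Sum>v\<in>U ` S. u v *\<^sub>R v) = y"
      using inj_U by (simp add: sum.reindex u_def the_inv_into_f_f y_def)
    moreover have "\<exists>v\<in>U ` S. u v \<noteq> 0" using c inj_U by (auto simp: u_def the_inv_into_f_f)
    ultimately have "dependent (U ` S)"
      using y0 finite_S by (auto simp: real_vector.dependent_finite)
    then show False using independent_U by simp
  qed
  then have "y \<bullet> (Hi *v y) > 0" using pd_matrix_inv_pd[OF pd_H] by blast
  also have "y \<bullet> (Hi *v y) = (\<Sum>a\<in>S. c a * (U a \<bullet> (\<Sum>b\<in>S. c b *\<^sub>R N b)))"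
    unfolding y_def N_def by (simp add: matrix_vector_mult_sum matrix_vector_mult_scaleR inner_sum_left)
  also have "\<dots> = (\<Sum>a\<in>S. \<Sum>b\<in>S. c a * gram a b * c b)"
    by (simp add: inner_sum_right gram_N sum_distrib_left mult_ac)
  finally show "(\<Sum>a\<in>S. \<Sum>b\<in>S. c a * gram a b * c b) > 0" .
qed

lemma G_inverse: "is_inv_on S gram G"
  using inv_on_is_inv_on[OF finite_S card_S gram_pd] unfolding gram_inv_def gram_def[abs_def] .

lemma G_outside: "i \<notin> S \<or> j \<notin> S \<Longrightarrow> G i j = 0"
  using G_inverse unfolding is_inv_on_def by blast

lemma gram_G: "i \<in> S \<Longrightarrow> j \<in> S \<Longrightarrow> (\<Sum>k\<in>S. gram i k * G k j) = (if i = j then 1 else 0)"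
  using G_inverse unfolding is_inv_on_def by blast

lemma G_sym: "G a b = G b a"
proof (cases "a \<in> S \<and> b \<in> S")
  case False then show ?thesis using G_outside by auto
next
  case True
  have "(\<Sum>k\<in>S. \<Sum>l\<in>S. G k a * gram k l * G l b) = (\<Sum>k\<in>S. G k a * (\<Sum>l\<in>S. gram k l * G l b))"
    by (simp add: sum_distrib_left mult_ac)
  also have "\<dots> = (\<Sum>k\<in>S. if k = b then G k a else 0)"
    by (rule sum.cong) (use True gram_G in auto)
  finally have left: "(\<Sum>k\<in>S. \<Sum>l\<in>S. G k a * gram k l * G l b) = G b a"
    using True finite_S by (simp add: sum.delta')
  have "(\<Sum>k\<in>S. \<Sum>l\<in>S. G k a * gram k l * G l b) = (\<Sum>l\<in>S. (\<Sum>k\<in>S. gram l k * G k a) * G l b)"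
    by (subst sum.swap) (simp add: sum_distrib_left sum_distrib_right gram_sym mult_ac)
  also have "\<dots> = (\<Sum>l\<in>S. if l = a then G l b else 0)"
    by (rule sum.cong) (use True gram_G in auto)
  finally show ?thesis using left True finite_S by (simp add: sum.delta')
qed

lemma P_N: "P i j = Hi$i$j - (\<Sum>a\<in>S. \<Sum>b\<in>S. N a $ i * G a b * N b $ j)"
  unfolding proj_P_def N_def by (simp add: vector_mult_Hi)

lemma P_sym: "P i j = P j i"
proof -
  have "Hi$i$j = Hi$j$i" using symmetric_Hi by (metis transpose_def vec_lambda_beta)
  moreover have "(\<Sum>a\<in>S. \<Sum>b\<in>S. N a $ i * G a b * N b $ j) = (\<Sum>a\<in>S. \<Sum>b\<in>S. N a $ j * G a b * N b $ i)"
    by (subst sum.swap) (simp add: G_sym mult_ac)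
  ultimately show ?thesis by (simp add: P_N)
qed

definition "Pcol j = (\<chi> i. P i j)"
definition "Qcol a = (\<chi> i. Q i a)"
definition "Pm = (\<chi> i j. P i j)"

lemma Pcol_eq: "Pcol j = column j Hi - (\<Sum>a\<in>S. \<Sum>b\<in>S. (G a b * N b $ j) *\<^sub>R N a)"
  unfolding Pcol_def by (simp add: vec_eq_iff P_N column_def mult_ac)

lemma Qcol_eq: "Qcol a = (\<Sum>b\<in>S. G b a *\<^sub>R N b)"
  unfolding Qcol_def proj_Q_def N_def by (simp add: vec_eq_iff mult_ac)

lemma U_column_Hi: "U c \<bullet> column j Hi = N c $ j"
proof -
  have "U c \<bullet> column j Hi = (U c v* Hi) $ j"
    by (simp add: inner_vec_def column_def vector_matrix_mult_def)
  then show ?thesis by (simp add: vector_mult_Hi N_def)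
qed

lemma H_column_Hi: "H *v column j Hi = axis j 1"
proof -
  have "H *v column j Hi = column j (H ** Hi)"
    by (simp add: vec_eq_iff matrix_vector_mult_def column_def matrix_matrix_mult_def)
  then show ?thesis by (simp add: H_Hi vec_eq_iff column_def mat_def axis_def)
qed

lemma Pcol_in_K: "Pcol j \<in> K"
proof -
  have "U c \<bullet> Pcol j = 0" if c: "c \<in> S" for c
  proof -
    have "U c \<bullet> (\<Sum>a\<in>S. \<Sum>b\<in>S. (G a b * N b $ j) *\<^sub>R N a) = (\<Sum>b\<in>S. (\<Sum>a\<in>S. gram c a * G a b) * N b $ j)"
      by (subst sum.swap) (simp add: inner_sum_right gram_N sum_distrib_left sum_distrib_right mult_ac)
    also have "\<dots> = (\<Sum>b\<in>S. if b = c then N b $ j else 0)"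
      by (rule sum.cong) (use c gram_G in auto)
    also have "\<dots> = N c $ j" using c finite_S by (simp add: sum.delta')
    finally show ?thesis unfolding Pcol_eq by (simp add: inner_diff_right U_column_Hi)
  qed
  then show ?thesis by (simp add: null_rows_def)
qed

lemma Pcol_solves: "z \<in> K \<Longrightarrow> z \<bullet> (H *v Pcol j) = z $ j"
proof -
  assume z: "z \<in> K"
  have "z \<bullet> (H *v (\<Sum>a\<in>S. \<Sum>b\<in>S. (G a b * N b $ j) *\<^sub>R N a)) = (\<Sum>a\<in>S. \<Sum>b\<in>S. (G a b * N b $ j) * (U a \<bullet> z))"
    by (simp add: matrix_vector_mult_sum matrix_vector_mult_scaleR H_N inner_sum_right inner_commute)
  also have "\<dots> = 0" using z unfolding null_rows_def by simp
  finally show ?thesis unfolding Pcol_eq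
    by (simp add: matrix_vector_mult_diff_distrib inner_diff_right H_column_Hi flip: cart_eq_inner_axis)
qed

lemma Pm_apply: "Pm *v w = (\<Sum>j\<in>UNIV. w $ j *\<^sub>R Pcol j)"
  by (simp add: vec_eq_iff matrix_vector_mult_def Pm_def Pcol_def mult.commute)

lemma Pm_in_K: "Pm *v w \<in> K"
  unfolding Pm_apply using Pcol_in_K subspace_null_rows
  by (intro subspace_sum subspace_scale) auto

lemma Pm_solves:
  assumes z: "z \<in> K" shows "z \<bullet> (H *v (Pm *v w)) = z \<bullet> w"
proof -
  have "z \<bullet> (H *v (Pm *v w)) = (\<Sum>j\<in>UNIV. w $ j * (z \<bullet> (H *v Pcol j)))"
    unfolding Pm_apply by (simp add: matrix_vector_mult_sum matrix_vector_mult_scaleR inner_sum_right)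
  also have "\<dots> = (\<Sum>j\<in>UNIV. w $ j * z $ j)" using Pcol_solves[OF z] by simp
  also have "\<dots> = z \<bullet> w" by (simp add: inner_vec_def mult.commute)
  finally show ?thesis .
qed

lemma U_Qcol: "a \<in> S \<Longrightarrow> c \<in> S \<Longrightarrow> U c \<bullet> Qcol a = (if c = a then 1 else 0)"
  unfolding Qcol_eq by (simp add: inner_sum_right gram_N[symmetric] gram_G mult.commute)

lemma Qcol_orthogonal: "z \<in> K \<Longrightarrow> z \<bullet> (H *v Qcol a) = 0"
  unfolding Qcol_eq null_rows_def
  by (simp add: matrix_vector_mult_sum matrix_vector_mult_scaleR H_N inner_sum_right inner_commute)

text \<open>\<open>Q\<^sup>t H Q = [U\<^sub>S H\<^sup>-\<^sup>1 U\<^sub>S\<^sup>t]\<^sup>-\<^sup>1\<close>, which expresses \<open>R\<close> through \<open>Q\<close>.\<close>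
lemma Qcol_H_Qcol: "a \<in> S \<Longrightarrow> b \<in> S \<Longrightarrow> Qcol b \<bullet> (H *v Qcol a) = G b a"
proof -
  assume a: "a \<in> S" and b: "b \<in> S"
  have "Qcol b \<bullet> (H *v Qcol a) = (\<Sum>d\<in>S. G d a * (U d \<bullet> Qcol b))"
    unfolding Qcol_eq[of a]
    by (simp add: matrix_vector_mult_sum matrix_vector_mult_scaleR H_N inner_sum_right inner_commute)
  also have "\<dots> = (\<Sum>d\<in>S. if d = b then G d a else 0)"
    by (rule sum.cong) (use b U_Qcol in auto)
  also have "\<dots> = G b a" using b finite_S by (simp add: sum.delta')
  finally show ?thesis .
qed

end

section \<open>Differentiability of solutions of coercive variational equations\<close>

lemma has_real_derivative_eventually:
  fixes g :: "real \<Rightarrow> real"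
  assumes "(g has_real_derivative D) (at r)" "\<eta> > 0"
  shows "eventually (\<lambda>t. \<bar>g t - g r - (t - r) * D\<bar> \<le> \<eta> * \<bar>t - r\<bar>) (at r)"
proof -
  have "(g has_derivative (\<lambda>h. h * D)) (at r within UNIV)"
    using assms(1) unfolding has_field_derivative_def by (simp add: mult.commute[of _ D])
  then show ?thesis
    using assms(2) unfolding has_derivative_within_alt2 by (simp only: real_norm_def)
qed

lemma quadratic_absorb:
  fixes c n B :: real
  assumes c: "c > 0" and n: "n \<ge> 0" and le: "c * n^2 \<le> n * (c/2 * n + B)" and B: "B \<ge> 0"
  shows "n \<le> 2 * B / c"
proof (cases "n = 0")
  case True then show ?thesis using B c by simp
next
  case False
  then have "c * n \<le> c/2 * n + B"
    using le n by (simp add: power2_eq_square mult.assoc mult_le_cancel_left_pos)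
  then show ?thesis using c by (simp add: field_simps)
qed

lemma has_derivative_vec_nth:
  fixes y :: "real \<Rightarrow> real^'n::finite"
  assumes "(y has_derivative (\<lambda>h. h *\<^sub>R y')) (at \<rho>)"
  shows "((\<lambda>t. y t $ i) has_real_derivative y' $ i) (at \<rho>)"
proof -
  have "((\<lambda>v. v $ i) \<circ> y has_derivative (\<lambda>v. v $ i) \<circ> (\<lambda>h. h *\<^sub>R y')) (at \<rho>)"
    by (rule diff_chain_at[OF assms]) (rule bounded_linear_imp_has_derivative[OF bounded_linear_vec_nth])
  moreover have "(\<lambda>x. x * y' $ i) = (*) (y' $ i)" by (auto simp: fun_eq_iff)
  ultimately show ?thesis by (simp add: has_field_derivative_def o_def)
qed

text \<open>Let \<open>e = y\<^sub>1 - y\<^sub>0 - \<tau> y'\<close> where \<open>y\<^sub>0\<close>, \<open>y\<^sub>1\<close> solve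
  the systems with matrices \<open>M\<^sub>0\<close>, \<open>M\<^sub>1\<close> (tested against \<open>e\<close>) and \<open>y'\<close> the differentiated system.
  If \<open>M\<^sub>1 - M\<^sub>0 - \<tau> M'\<close> is of order \<open>\<eta> |\<tau>|\<close> and \<open>M\<^sub>1 - M\<^sub>0\<close> of order \<open>\<delta> \<le> c/2\<close>, then \<open>e\<close> is
  of order \<open>\<eta> |\<tau>|\<close>.  (\<open>N\<close> accounts for passing from entries to bilinear forms.)\<close>
lemma linear_perturbation_estimate:
  fixes M0 M1 M' :: "real^'n::finite^'n" and y0 y1 y' e :: "real^'n"
  assumes e: "e = y1 - y0 - \<tau> *\<^sub>R y'" and N: "N = real CARD('n) * real CARD('n)"
    and eq: "e \<bullet> (M1 *v y1) = e \<bullet> (M0 *v y0)"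
    and y'eq: "e \<bullet> (M0 *v y') = - (e \<bullet> (M' *v y0))"
    and c: "c > 0" and coercive: "c * (norm e)^2 \<le> e \<bullet> (M0 *v e)"
    and lin: "\<forall>i j. \<bar>M1 $ i $ j - M0 $ i $ j - \<tau> * M' $ i $ j\<bar> \<le> \<eta> / N * \<bar>\<tau>\<bar>"
    and close: "\<forall>i j. \<bar>M1 $ i $ j - M0 $ i $ j\<bar> \<le> \<delta> / N"
    and \<delta>: "0 \<le> \<delta>" "\<delta> \<le> c/2" "\<delta> \<le> \<eta>"
  shows "norm e \<le> 2 * (\<eta> * \<bar>\<tau>\<bar> * (1 + norm y0 + norm y')) / c"
proof -
  define \<Delta> where "\<Delta> = M1 - M0"
  define \<gamma> where "\<gamma> = \<Delta> - \<tau> *\<^sub>R M'"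
  define n where "n = norm e"
  define a where "a = \<bar>\<tau>\<bar>"
  have n: "n \<ge> 0" and a: "a \<ge> 0" unfolding n_def a_def by auto
  have Npos: "N > 0" using N by simp
  text \<open>Subtracting the two equations and the differentiated one:\<close>
  have key: "e \<bullet> (M0 *v e) = - (e \<bullet> (\<gamma> *v y0)) - e \<bullet> (\<Delta> *v e) - \<tau> * (e \<bullet> (\<Delta> *v y'))"
  proof -
    have "M1 *v y1 = (M0 + \<Delta>) *v (e + y0 + \<tau> *\<^sub>R y')" by (simp add: \<Delta>_def e)
    also have "\<dots> = M0 *v e + M0 *v y0 + \<tau> *\<^sub>R (M0 *v y') + \<Delta> *v e + \<Delta> *v y0 + \<tau> *\<^sub>R (\<Delta> *v y')"
      by (simp add: matrix_vector_mult_add_rdistrib matrix_vector_right_distrib matrix_vector_mult_scaleR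
          scaleR_right_distrib)
    also have "\<Delta> *v y0 = \<gamma> *v y0 + \<tau> *\<^sub>R (M' *v y0)"
      by (simp add: \<gamma>_def matrix_vector_mult_diff_rdistrib scaleR_matrix_vector_assoc)
    finally have "e \<bullet> (M1 *v y1) = e \<bullet> (M0 *v e) + e \<bullet> (M0 *v y0) + \<tau> * (e \<bullet> (M0 *v y') + e \<bullet> (M' *v y0))
        + e \<bullet> (\<Delta> *v e) + e \<bullet> (\<gamma> *v y0) + \<tau> * (e \<bullet> (\<Delta> *v y'))"
      by (simp add: inner_add_right distrib_left)
    then show ?thesis using eq y'eq by simp
  qed
  have b1: "- (e \<bullet> (\<gamma> *v y0)) \<le> \<eta> * a * n * norm y0"
    using bilinear_form_entry_bound[of \<gamma> "\<eta> / N * a" e y0] lin Npos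
    by (simp add: \<gamma>_def \<Delta>_def a_def n_def N)
  have b2: "- (e \<bullet> (\<Delta> *v e)) \<le> c/2 * n * n"
  proof -
    have "\<bar>e \<bullet> (\<Delta> *v e)\<bar> \<le> \<delta> * n * n"
      using bilinear_form_entry_bound[of \<Delta> "\<delta> / N" e e] close Npos by (simp add: \<Delta>_def n_def N)
    also have "\<dots> \<le> c/2 * n * n" using \<delta> n by (intro mult_right_mono) auto
    finally show ?thesis by linarith
  qed
  have b3: "- (\<tau> * (e \<bullet> (\<Delta> *v y'))) \<le> \<eta> * a * n * norm y'"
  proof -
    have "\<bar>e \<bullet> (\<Delta> *v y')\<bar> \<le> \<delta> * n * norm y'"
      using bilinear_form_entry_bound[of \<Delta> "\<delta> / N" e y'] close Npos by (simp add: \<Delta>_def n_def N)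
    also have "\<dots> \<le> \<eta> * n * norm y'" using \<delta> n by (intro mult_right_mono) auto
    finally have "a * \<bar>e \<bullet> (\<Delta> *v y')\<bar> \<le> a * (\<eta> * n * norm y')" using a by (intro mult_left_mono)
    moreover have "- (\<tau> * (e \<bullet> (\<Delta> *v y'))) \<le> a * \<bar>e \<bullet> (\<Delta> *v y')\<bar>"
      unfolding a_def by (metis abs_ge_minus_self abs_mult)
    ultimately show ?thesis by (simp add: mult_ac)
  qed
  have "c * n^2 \<le> n * (c/2 * n + \<eta> * a * (1 + norm y0 + norm y'))"
  proof -
    have "n * (c/2 * n + \<eta> * a * (1 + norm y0 + norm y'))
        = c/2 * n * n + \<eta> * a * n * norm y0 + \<eta> * a * n * norm y' + \<eta> * a * n"
      by (simp add: algebra_simps)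
    moreover have "0 \<le> \<eta> * a * n" using \<delta> a n by simp
    ultimately show ?thesis using coercive key b1 b2 b3 unfolding n_def by linarith
  qed
  then have "n \<le> 2 * (\<eta> * a * (1 + norm y0 + norm y')) / c"
    by (rule quadratic_absorb[OF c n]) (use \<delta> a in simp)
  then show ?thesis unfolding n_def a_def .
qed

lemma variational_solution_has_derivative:
  fixes M :: "real \<Rightarrow> real^'n::finite^'n" and y :: "real \<Rightarrow> real^'n" and M' :: "real^'n^'n"
  assumes T: "open T" "\<rho> \<in> T" and K: "subspace K"
    and yK: "\<forall>t\<in>T. y t - y \<rho> \<in> K"
    and eq: "\<forall>t\<in>T. \<forall>z\<in>K. z \<bullet> (M t *v y t) = z \<bullet> b"
    and M': "\<forall>i j. ((\<lambda>t. M t $ i $ j) has_real_derivative M' $ i $ j) (at \<rho>)"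
    and c: "c > 0" and coercive: "\<forall>z\<in>K. c * (norm z)^2 \<le> z \<bullet> (M \<rho> *v z)"
    and y'K: "y' \<in> K" and y'eq: "\<forall>z\<in>K. z \<bullet> (M \<rho> *v y') = - (z \<bullet> (M' *v y \<rho>))"
  shows "(y has_derivative (\<lambda>h. h *\<^sub>R y')) (at \<rho>)"
  unfolding has_derivative_within_alt2
proof (intro conjI allI impI)
  show "bounded_linear (\<lambda>h. h *\<^sub>R y')" by (rule bounded_linear_scaleR_left)
  fix \<epsilon> :: real assume \<epsilon>: "\<epsilon> > 0"
  define N where "N = real CARD('n) * real CARD('n)"
  have N: "N > 0" unfolding N_def by simp
  define C where "C = 1 + norm (y \<rho>) + norm y'"
  have C: "C > 0" unfolding C_def by (smt (verit) norm_ge_zero)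
  define \<eta> where "\<eta> = \<epsilon> * c / (2 * C)"
  have \<eta>: "\<eta> > 0" unfolding \<eta>_def using \<epsilon> c C by simp
  define \<delta> where "\<delta> = min (c/2) \<eta>"
  have \<delta>: "\<delta> > 0" "\<delta> \<le> c/2" "\<delta> \<le> \<eta>" unfolding \<delta>_def using c \<eta> by auto
  have lin: "eventually (\<lambda>t. \<forall>i j. \<bar>M t $ i $ j - M \<rho> $ i $ j - (t - \<rho>) * M' $ i $ j\<bar> \<le> \<eta> / N * \<bar>t - \<rho>\<bar>) (at \<rho>)"
    by (intro eventually_all_finite has_real_derivative_eventually[OF M'[rule_format]]) (use \<eta> N in simp)
  have close: "eventually (\<lambda>t. \<forall>i j. \<bar>M t $ i $ j - M \<rho> $ i $ j\<bar> \<le> \<delta> / N) (at \<rho>)"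
  proof (intro eventually_all_finite)
    fix i j
    have "((\<lambda>t. M t $ i $ j) \<longlongrightarrow> M \<rho> $ i $ j) (at \<rho>)"
      using DERIV_isCont[OF M'[rule_format, of i j]] by (simp add: isCont_def)
    then have "eventually (\<lambda>t. dist (M t $ i $ j) (M \<rho> $ i $ j) < \<delta> / N) (at \<rho>)"
      using \<delta> N by (intro tendstoD) simp_all
    then show "eventually (\<lambda>t. \<bar>M t $ i $ j - M \<rho> $ i $ j\<bar> \<le> \<delta> / N) (at \<rho>)"
      by eventually_elim (simp add: dist_real_def)
  qed
  have inT: "eventually (\<lambda>t. t \<in> T) (at \<rho>)"
    unfolding eventually_at_topological using T by blast
  show "eventually (\<lambda>t. norm (y t - y \<rho> - (t - \<rho>) *\<^sub>R y') \<le> \<epsilon> * norm (t - \<rho>)) (at \<rho>)"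
    using lin close inT
  proof eventually_elim
    case (elim t)
    define e where "e = y t - y \<rho> - (t - \<rho>) *\<^sub>R y'"
    have eK: "e \<in> K" unfolding e_def using yK elim(3) y'K K by (simp add: subspace_diff subspace_scale)
    have "norm e \<le> 2 * (\<eta> * \<bar>t - \<rho>\<bar> * C) / c" unfolding C_def
    proof (rule linear_perturbation_estimate[OF e_def N_def _ _ c _ elim(1,2)])
      show "e \<bullet> (M t *v y t) = e \<bullet> (M \<rho> *v y \<rho>)" using eq elim(3) T(2) eK by metis
      show "e \<bullet> (M \<rho> *v y') = - (e \<bullet> (M' *v y \<rho>))" using y'eq eK by blast
      show "c * (norm e)^2 \<le> e \<bullet> (M \<rho> *v e)" using coercive eK by blast
    qed (use \<delta> in auto)
    also have "\<dots> = \<epsilon> * \<bar>t - \<rho>\<bar>" unfolding \<eta>_def using c C by (simp add: field_simps)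
    finally show ?case unfolding e_def by simp
  qed
qed

lemma nonlinear_perturbation_estimate:
  fixes H :: "real^'n::finite^'n"
  assumes e: "e = x1 - x0 - \<tau> *\<^sub>R x'" and key: "e \<bullet> (H *v e) = - (e \<bullet> r)"
    and c: "c > 0" and coercive: "c * (norm e)^2 \<le> e \<bullet> (H *v e)"
    and r: "norm r \<le> \<delta> * norm (x1 - x0)" and \<delta>: "0 \<le> \<delta>" "\<delta> \<le> c/2" "\<delta> \<le> \<eta>"
  shows "norm e \<le> 2 * (\<eta> * \<bar>\<tau>\<bar> * (1 + norm x')) / c"
proof -
  define n where "n = norm e"
  define a where "a = \<bar>\<tau>\<bar>"
  have n: "n \<ge> 0" and a: "a \<ge> 0" unfolding n_def a_def by auto
  have step: "norm (x1 - x0) \<le> n + a * norm x'"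
    using norm_triangle_ineq[of e "\<tau> *\<^sub>R x'"] by (simp add: e n_def a_def)
  have "c * n^2 \<le> - (e \<bullet> r)" using coercive key unfolding n_def by simp
  also have "\<dots> \<le> n * norm r" using Cauchy_Schwarz_ineq2[of e r] unfolding n_def by linarith
  also have "\<dots> \<le> n * (\<delta> * (n + a * norm x'))"
    using r step n \<delta> by (intro mult_left_mono) (auto intro: order_trans mult_left_mono)
  also have "\<dots> \<le> n * (c/2 * n + \<eta> * a * (1 + norm x'))"
  proof (intro mult_left_mono n)
    have "a * norm x' \<le> a * (1 + norm x')" using a by (intro mult_left_mono) simp_all
    then have "\<delta> * (a * norm x') \<le> \<eta> * (a * (1 + norm x'))"
      by (rule mult_mono[OF \<delta>(3)]) (use \<delta> a in auto)
    moreover have "\<delta> * n \<le> c/2 * n" using \<delta> n by (intro mult_right_mono) auto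
    ultimately show "\<delta> * (n + a * norm x') \<le> c/2 * n + \<eta> * a * (1 + norm x')"
      by (simp add: distrib_left mult_ac)
  qed
  finally have "n \<le> 2 * (\<eta> * a * (1 + norm x')) / c"
    by (rule quadratic_absorb[OF c n]) (use \<delta> a in simp)
  then show ?thesis unfolding n_def a_def .
qed

lemma stationary_curve_has_derivative:
  fixes g :: "real^'n::finite \<Rightarrow> real^'n" and x :: "real \<Rightarrow> real^'n" and H :: "real^'n^'n"
  assumes T: "open T" "\<rho> \<in> T" and K: "subspace K"
    and xK: "\<forall>t\<in>T. x t - x \<rho> \<in> K"
    and cont: "continuous (at \<rho>) x"
    and stat: "\<forall>t\<in>T. \<forall>z\<in>K. z \<bullet> g (x t) + t * (z \<bullet> u) = 0"
    and g': "(g has_derivative (\<lambda>h. H *v h)) (at (x \<rho>))"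
    and c: "c > 0" and coercive: "\<forall>z\<in>K. c * (norm z)^2 \<le> z \<bullet> (H *v z)"
    and x'K: "x' \<in> K" and x'eq: "\<forall>z\<in>K. z \<bullet> (H *v x') = - (z \<bullet> u)"
  shows "(x has_derivative (\<lambda>h. h *\<^sub>R x')) (at \<rho>)"
  unfolding has_derivative_within_alt2
proof (intro conjI allI impI)
  show "bounded_linear (\<lambda>h. h *\<^sub>R x')" by (rule bounded_linear_scaleR_left)
  fix \<epsilon> :: real assume \<epsilon>: "\<epsilon> > 0"
  define C where "C = 1 + norm x'"
  have C: "C > 0" unfolding C_def by (smt (verit) norm_ge_zero)
  define \<eta> where "\<eta> = \<epsilon> * c / (2 * C)"
  have \<eta>: "\<eta> > 0" unfolding \<eta>_def using \<epsilon> c C by simp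
  define \<delta> where "\<delta> = min (c/2) \<eta>"
  have \<delta>: "\<delta> > 0" "\<delta> \<le> c/2" "\<delta> \<le> \<eta>" unfolding \<delta>_def using c \<eta> by auto
  obtain d where d: "d > 0" and approx: "\<And>y. norm (y - x \<rho>) < d \<Longrightarrow>
      norm (g y - g (x \<rho>) - H *v (y - x \<rho>)) \<le> \<delta> * norm (y - x \<rho>)"
    using g' \<delta>(1) unfolding has_derivative_at_alt by blast
  have near: "eventually (\<lambda>t. dist (x t) (x \<rho>) < d) (at \<rho>)"
    using cont d unfolding continuous_at by (rule tendstoD)
  have inT: "eventually (\<lambda>t. t \<in> T) (at \<rho>)"
    unfolding eventually_at_topological using T by blast
  show "eventually (\<lambda>t. norm (x t - x \<rho> - (t - \<rho>) *\<^sub>R x') \<le> \<epsilon> * norm (t - \<rho>)) (at \<rho>)"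
    using near inT
  proof eventually_elim
    case (elim t)
    define e where "e = x t - x \<rho> - (t - \<rho>) *\<^sub>R x'"
    define r where "r = g (x t) - g (x \<rho>) - H *v (x t - x \<rho>)"
    have eK: "e \<in> K" unfolding e_def using xK elim(2) x'K K by (simp add: subspace_diff subspace_scale)
    text \<open>Subtracting the stationarity conditions at \<open>t\<close>, at \<open>\<rho>\<close> and the equation for \<open>x'\<close>:\<close>
    have key: "e \<bullet> (H *v e) = - (e \<bullet> r)"
    proof -
      have st: "e \<bullet> g (x t) + t * (e \<bullet> u) = 0" "e \<bullet> g (x \<rho>) + \<rho> * (e \<bullet> u) = 0"
        using stat elim(2) T(2) eK by blast+
      have "e \<bullet> (H *v e) = e \<bullet> (H *v (x t - x \<rho>)) - (t - \<rho>) * (e \<bullet> (H *v x'))"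
        unfolding e_def by (simp add: matrix_vector_mult_diff_distrib matrix_vector_mult_scaleR inner_diff_right)
      also have "\<dots> = e \<bullet> (H *v (x t - x \<rho>)) + (t - \<rho>) * (e \<bullet> u)" using x'eq eK by simp
      also have "e \<bullet> (H *v (x t - x \<rho>)) = e \<bullet> g (x t) - e \<bullet> g (x \<rho>) - e \<bullet> r"
        unfolding r_def by (simp add: inner_diff_right)
      finally show ?thesis using st by (simp add: algebra_simps)
    qed
    have "norm e \<le> 2 * (\<eta> * \<bar>t - \<rho>\<bar> * C) / c" unfolding C_def
    proof (rule nonlinear_perturbation_estimate[OF e_def key c])
      show "c * (norm e)^2 \<le> e \<bullet> (H *v e)" using coercive eK by blast
      show "norm r \<le> \<delta> * norm (x t - x \<rho>)" unfolding r_def using approx elim(1) by (simp add: dist_norm)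
    qed (use \<delta> in auto)
    also have "\<dots> = \<epsilon> * \<bar>t - \<rho>\<bar>" unfolding \<eta>_def using c C by (simp add: field_simps)
    finally show ?case unfolding e_def by simp
  qed
qed

section \<open>Stationarity of minimisers of the exact penalty\<close>

lemma gE_along: "gE v d i (y + \<sigma> *\<^sub>R z) = gE v d i y + \<sigma> * (v i \<bullet> z)"
  by (simp add: gE_def inner_add_right)

lemma hI_along: "hI w e j (y + \<sigma> *\<^sub>R z) = hI w e j y + \<sigma> * (w j \<bullet> z)"
  by (simp add: hI_def inner_add_right)

lemma sum_over_subset_lessThan:
  fixes n :: nat
  assumes "A \<subseteq> {..<n}"
  shows "(\<Sum>i<n. if i \<in> A then g i else 0) = (\<Sum>i\<in>A. g i)"
proof -
  have "(\<Sum>i<n. if i \<in> A then g i else 0) = (\<Sum>i\<in>{..<n} \<inter> A. g i)"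
    by (rule sum.inter_restrict[symmetric]) simp
  then show ?thesis using assms by (simp add: Int_absorb1)
qed

lemma penalty_index_sums:
  "penalty f v d r w e s t y = f y + t * ((\<Sum>i\<in>PE v d r y. gE v d i y) - (\<Sum>i\<in>NE v d r y. gE v d i y)
     + (\<Sum>j\<in>PI' w e s y. hI w e j y))"
proof -
  have sub: "PE v d r y \<subseteq> {..<r}" "NE v d r y \<subseteq> {..<r}" "PI' w e s y \<subseteq> {..<s}"
    by (auto simp: PE_def NE_def PI'_def)
  have "(\<Sum>i<r. \<bar>gE v d i y\<bar>) = (\<Sum>i<r. (if i \<in> PE v d r y then gE v d i y else 0)
      - (if i \<in> NE v d r y then gE v d i y else 0))"
    by (rule sum.cong) (auto simp: PE_def NE_def)
  also have "\<dots> = (\<Sum>i\<in>PE v d r y. gE v d i y) - (\<Sum>i\<in>NE v d r y. gE v d i y)"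
    by (simp only: sum_subtractf sum_over_subset_lessThan[OF sub(1)] sum_over_subset_lessThan[OF sub(2)])
  finally have E: "(\<Sum>i<r. \<bar>gE v d i y\<bar>) = (\<Sum>i\<in>PE v d r y. gE v d i y) - (\<Sum>i\<in>NE v d r y. gE v d i y)" .
  have "(\<Sum>j<s. max 0 (hI w e j y)) = (\<Sum>j<s. if j \<in> PI' w e s y then hI w e j y else 0)"
    by (rule sum.cong) (auto simp: PI'_def)
  also have "\<dots> = (\<Sum>j\<in>PI' w e s y. hI w e j y)"
    by (rule sum_over_subset_lessThan[OF sub(3)])
  finally have I: "(\<Sum>j<s. max 0 (hI w e j y)) = (\<Sum>j\<in>PI' w e s y. hI w e j y)" .
  show ?thesis unfolding penalty_def E I by (simp add: algebra_simps)
qed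

lemma sgn_affine_eventually:
  fixes a b :: "'i \<Rightarrow> real"
  assumes "finite A"
  shows "eventually (\<lambda>\<sigma>. \<forall>i\<in>A. a i \<noteq> 0 \<longrightarrow> sgn (a i + \<sigma> * b i) = sgn (a i)) (at 0)"
proof (rule eventually_ball_finite[OF assms], rule ballI)
  fix i
  have lim: "((\<lambda>\<sigma>. a i + \<sigma> * b i) \<longlongrightarrow> a i) (at 0)"
  proof -
    have "((\<lambda>\<sigma>. a i + \<sigma> * b i) \<longlongrightarrow> a i + 0 * b i) (at 0)" by (intro tendsto_intros)
    then show ?thesis by simp
  qed
  consider "a i = 0" | "a i > 0" | "a i < 0" by linarith
  then show "eventually (\<lambda>\<sigma>. a i \<noteq> 0 \<longrightarrow> sgn (a i + \<sigma> * b i) = sgn (a i)) (at 0)"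
  proof cases
    case 2
    then have "eventually (\<lambda>\<sigma>. 0 < a i + \<sigma> * b i) (at 0)" by (intro order_tendstoD(1)[OF lim])
    then show ?thesis by eventually_elim (use 2 in simp)
  next
    case 3
    then have "eventually (\<lambda>\<sigma>. a i + \<sigma> * b i < 0) (at 0)" by (intro order_tendstoD(2)[OF lim])
    then show ?thesis by eventually_elim (use 3 in simp)
  qed simp
qed

lemma index_sets_along_tangent:
  assumes zK: "z \<in> null_rows (Zset v d r w e s y) (urow v w)"
  shows "eventually (\<lambda>\<sigma>. NE v d r (y + \<sigma> *\<^sub>R z) = NE v d r y \<and> PE v d r (y + \<sigma> *\<^sub>R z) = PE v d r y
      \<and> PI' w e s (y + \<sigma> *\<^sub>R z) = PI' w e s y) (at 0)"
proof -
  have zE: "v i \<bullet> z = 0" if "i \<in> ZE v d r y" for i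
    using zK that by (force simp: null_rows_def Zset_def)
  have zI: "w j \<bullet> z = 0" if "j \<in> ZI w e s y" for j
    using zK that by (force simp: null_rows_def Zset_def)
  have "eventually (\<lambda>\<sigma>. (\<forall>i\<in>{..<r}. gE v d i y \<noteq> 0 \<longrightarrow> sgn (gE v d i (y + \<sigma> *\<^sub>R z)) = sgn (gE v d i y))
      \<and> (\<forall>j\<in>{..<s}. hI w e j y \<noteq> 0 \<longrightarrow> sgn (hI w e j (y + \<sigma> *\<^sub>R z)) = sgn (hI w e j y))) (at 0)"
    unfolding gE_along hI_along by (intro eventually_conj sgn_affine_eventually finite_lessThan)
  then show ?thesis
  proof eventually_elim
    case (elim \<sigma>)
    have "sgn (gE v d i (y + \<sigma> *\<^sub>R z)) = sgn (gE v d i y)" if "i < r" for i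
      using elim zE[of i] that by (cases "gE v d i y = 0") (auto simp: gE_along ZE_def)
    then have g: "gE v d i (y + \<sigma> *\<^sub>R z) < 0 \<longleftrightarrow> gE v d i y < 0"
        "0 < gE v d i (y + \<sigma> *\<^sub>R z) \<longleftrightarrow> 0 < gE v d i y" if "i < r" for i
      using that by (metis sgn_less, metis sgn_greater)
    have "sgn (hI w e j (y + \<sigma> *\<^sub>R z)) = sgn (hI w e j y)" if "j < s" for j
      using elim zI[of j] that by (cases "hI w e j y = 0") (auto simp: hI_along ZI_def)
    then have h: "0 < hI w e j (y + \<sigma> *\<^sub>R z) \<longleftrightarrow> 0 < hI w e j y" if "j < s" for j
      using that by (metis sgn_greater)
    show ?case using g h by (auto simp: NE_def PE_def PI'_def)
  qed
qed

lemma penalty_minimiser_stationary: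
  assumes C3: "C3 f"
    and minimal: "\<forall>y'. penalty f v d r w e s t y \<le> penalty f v d r w e s t y'"
    and zK: "z \<in> null_rows (Zset v d r w e s y) (urow v w)"
  shows "z \<bullet> gradient f y + t * (z \<bullet> ubar v d r w e s y) = 0"
proof -
  define u where "u = ubar v d r w e s y"
  define \<phi> where "\<phi> \<sigma> = penalty f v d r w e s t (y + \<sigma> *\<^sub>R z)" for \<sigma>
  define c where "c = (\<Sum>i\<in>PE v d r y. gE v d i y) - (\<Sum>i\<in>NE v d r y. gE v d i y) + (\<Sum>j\<in>PI' w e s y. hI w e j y)"
  define \<psi> where "\<psi> \<sigma> = f (y + \<sigma> *\<^sub>R z) + t * (c + \<sigma> * (z \<bullet> u))" for \<sigma>
  have zu: "z \<bullet> u = (\<Sum>i\<in>PE v d r y. v i \<bullet> z) - (\<Sum>i\<in>NE v d r y. v i \<bullet> z) + (\<Sum>j\<in>PI' w e s y. w j \<bullet> z)"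
    unfolding u_def ubar_def by (simp add: inner_add_right inner_diff_right inner_sum_right inner_commute)
  text \<open>Near \<open>\<sigma> = 0\<close> the penalty along the line is the smooth function \<open>\<psi>\<close>.\<close>
  have "eventually (\<lambda>\<sigma>. \<phi> \<sigma> = \<psi> \<sigma>) (at 0)"
    using index_sets_along_tangent[OF zK]
  proof eventually_elim
    case (elim \<sigma>)
    then show ?case unfolding \<phi>_def \<psi>_def penalty_index_sums c_def zu
      by (simp add: gE_along hI_along sum.distrib sum_distrib_left algebra_simps)
  qed
  then obtain \<delta> where \<delta>: "\<delta> > 0" and agree: "\<And>\<sigma>. \<sigma> \<noteq> 0 \<Longrightarrow> dist \<sigma> 0 < \<delta> \<Longrightarrow> \<phi> \<sigma> = \<psi> \<sigma>"
    unfolding eventually_at by blast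
  have at0: "\<psi> 0 = \<phi> 0" by (simp add: \<phi>_def \<psi>_def penalty_index_sums c_def)
  have local_min: "\<forall>\<sigma>. \<bar>0 - \<sigma>\<bar> < \<delta> \<longrightarrow> \<psi> 0 \<le> \<psi> \<sigma>"
  proof (intro allI impI)
    fix \<sigma> :: real assume near: "\<bar>0 - \<sigma>\<bar> < \<delta>"
    show "\<psi> 0 \<le> \<psi> \<sigma>"
    proof (cases "\<sigma> = 0")
      case False
      then have "\<psi> \<sigma> = \<phi> \<sigma>" using agree near by (simp add: dist_real_def)
      moreover have "\<phi> 0 \<le> \<phi> \<sigma>" using minimal by (simp add: \<phi>_def)
      ultimately show ?thesis using at0 by simp
    qed simp
  qed
  have "((\<lambda>\<sigma>. f (y + \<sigma> *\<^sub>R z)) has_real_derivative z \<bullet> gradient f y) (at 0)"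
    using has_real_derivative_along_line[of f y 0 z] C3_differentiable(1)[OF C3]
      frechet_derivative_gradient[OF C3, of y z] by simp
  then have "(\<psi> has_real_derivative z \<bullet> gradient f y + t * (z \<bullet> u)) (at 0)"
    unfolding \<psi>_def by (auto intro!: derivative_eq_intros)
  from DERIV_local_min[OF this \<delta> local_min] show ?thesis unfolding u_def .
qed

section \<open>Derivatives along the path of minimisers\<close>

lemma bilinear_form_has_real_derivative:
  fixes p q :: "real \<Rightarrow> real^'n::finite" and M :: "real \<Rightarrow> real^'n^'n"
  assumes p: "(p has_derivative (\<lambda>h. h *\<^sub>R p')) (at \<rho>)" and q: "(q has_derivative (\<lambda>h. h *\<^sub>R q')) (at \<rho>)"
    and M: "\<forall>i j. ((\<lambda>t. M t $ i $ j) has_real_derivative M' $ i $ j) (at \<rho>)"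
  shows "((\<lambda>t. p t \<bullet> (M t *v q t)) has_real_derivative
      p' \<bullet> (M \<rho> *v q \<rho>) + p \<rho> \<bullet> (M' *v q \<rho>) + p \<rho> \<bullet> (M \<rho> *v q')) (at \<rho>)"
proof -
  have "((\<lambda>t. \<Sum>k\<in>UNIV. \<Sum>l\<in>UNIV. p t $ k * M t $ k $ l * q t $ l) has_real_derivative
      (\<Sum>k\<in>UNIV. \<Sum>l\<in>UNIV. p \<rho> $ k * M \<rho> $ k $ l * q' $ l
         + (p \<rho> $ k * M' $ k $ l + p' $ k * M \<rho> $ k $ l) * q \<rho> $ l)) (at \<rho>)"
    using has_derivative_vec_nth[OF p] has_derivative_vec_nth[OF q] M
    by (intro DERIV_sum DERIV_mult') auto
  moreover have "(\<Sum>k\<in>UNIV. \<Sum>l\<in>UNIV. p \<rho> $ k * M \<rho> $ k $ l * q' $ l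
         + (p \<rho> $ k * M' $ k $ l + p' $ k * M \<rho> $ k $ l) * q \<rho> $ l)
      = p' \<bullet> (M \<rho> *v q \<rho>) + p \<rho> \<bullet> (M' *v q \<rho>) + p \<rho> \<bullet> (M \<rho> *v q')"
    by (simp add: sum_bilinear_form[symmetric] sum.distrib algebra_simps)
  ultimately show ?thesis by (simp add: sum_bilinear_form)
qed

lemma sum_kron:
  "(\<Sum>c\<in>UNIV. kron A B (a, b) c * g c) = (\<Sum>k\<in>UNIV. B b k * (\<Sum>l\<in>UNIV. g (l, k) * A a l))"
  for A :: "'a \<Rightarrow> 'l::finite \<Rightarrow> real" and B :: "'b \<Rightarrow> 'k::finite \<Rightarrow> real"
proof -
  have "(\<Sum>c\<in>UNIV. kron A B (a, b) c * g c) = (\<Sum>(l, k)\<in>UNIV. A a l * B b k * g (l, k))"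
    by (rule sum.cong) (auto simp: kron_def)
  also have "\<dots> = (\<Sum>l\<in>UNIV. \<Sum>k\<in>UNIV. A a l * B b k * g (l, k))"
    by (simp add: sum.cartesian_product)
  also have "\<dots> = (\<Sum>k\<in>UNIV. B b k * (\<Sum>l\<in>UNIV. g (l, k) * A a l))"
    by (subst sum.swap) (simp add: sum_distrib_left mult_ac)
  finally show ?thesis .
qed

locale penalty_path =
  fixes f :: "real^'n::finite \<Rightarrow> real"
    and v w :: "nat \<Rightarrow> real^'n" and d e :: "nat \<Rightarrow> real" and r s :: nat
    and I :: "real set" and x :: "real \<Rightarrow> real^'n" and \<rho> :: real
  assumes C3: "C3 f"
    and pd: "\<forall>y z. z \<noteq> 0 \<longrightarrow> z \<bullet> (hess f y *v z) > 0"
    and I: "open I"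
    and minimizer: "\<forall>t\<in>I. \<forall>y. penalty f v d r w e s t (x t) \<le> penalty f v d r w e s t y"
    and cont: "continuous_on I x"
    and const: "\<forall>t1\<in>I. \<forall>t2\<in>I.
         NE v d r (x t1) = NE v d r (x t2) \<and> ZE v d r (x t1) = ZE v d r (x t2)
       \<and> PE v d r (x t1) = PE v d r (x t2) \<and> NI w e s (x t1) = NI w e s (x t2)
       \<and> ZI w e s (x t1) = ZI w e s (x t2) \<and> PI' w e s (x t1) = PI' w e s (x t2)"
    and indep: "\<forall>t\<in>I. inj_on (urow v w) (Zset v d r w e s (x t))
                  \<and> independent (urow v w ` Zset v d r w e s (x t))"
    and \<rho>: "\<rho> \<in> I"
begin

abbreviation "Z \<equiv> Zset v d r w e s (x \<rho>)"
abbreviation "U \<equiv> urow v w"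
abbreviation "u \<equiv> ubar v d r w e s (x \<rho>)"
abbreviation "K \<equiv> null_rows Z U"
abbreviation "Hx t \<equiv> hess f (x t)"
abbreviation "P t \<equiv> Pmat f v d r w e s (x t)"
abbreviation "Q t \<equiv> Qmat f v d r w e s (x t)"

lemma Zset_const: "t \<in> I \<Longrightarrow> Zset v d r w e s (x t) = Z"
  using const \<rho> unfolding Zset_def by metis

lemma ubar_const: "t \<in> I \<Longrightarrow> ubar v d r w e s (x t) = u"
  using const \<rho> unfolding ubar_def by metis

lemma finite_Z: "finite Z"
proof -
  have "Z \<subseteq> Inl ` {..<r} \<union> Inr ` {..<s}" by (auto simp: Zset_def ZE_def ZI_def)
  then show ?thesis by (rule finite_subset) auto
qed

lemma active_system: "t \<in> I \<Longrightarrow> active_system (Hx t) Z U"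
  unfolding active_system_def using hess_transpose[OF C3] pd finite_Z indep Zset_const by metis

lemma Pmat_eq: "t \<in> I \<Longrightarrow> P t = proj_P (Hx t) Z U"
  using Zset_const by (simp add: Pmat_def proj_P_def gram_inv_def Ginv_def Let_def)

lemma Qmat_eq: "t \<in> I \<Longrightarrow> Q t = proj_Q (Hx t) Z U"
  using Zset_const by (simp add: Qmat_def proj_Q_def gram_inv_def Ginv_def Let_def)

lemma Rmat_eq: "t \<in> I \<Longrightarrow> Rmat f v d r w e s (x t) a b = - gram_inv (Hx t) Z U a b"
  using Zset_const by (simp add: Rmat_def gram_inv_def Ginv_def Let_def)

text \<open>The active constraints stay active, so \<open>x(t) - x(\<rho>)\<close> is tangent to them.\<close>
lemma x_diff_in_K: "t \<in> I \<Longrightarrow> x t - x \<rho> \<in> K"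
proof -
  assume t: "t \<in> I"
  have "U a \<bullet> x t = U a \<bullet> x \<rho>" if a: "a \<in> Z" for a
  proof (cases a)
    case (Inl i)
    then have "i \<in> ZE v d r (x \<rho>)" "i \<in> ZE v d r (x t)" using a Zset_const[OF t] by (auto simp: Zset_def)
    then show ?thesis using Inl by (simp add: ZE_def gE_def)
  next
    case (Inr j)
    then have "j \<in> ZI w e s (x \<rho>)" "j \<in> ZI w e s (x t)" using a Zset_const[OF t] by (auto simp: Zset_def)
    then show ?thesis using Inr by (simp add: ZI_def hI_def)
  qed
  then show ?thesis unfolding null_rows_def by (simp add: inner_diff_right)
qed

lemma stationary: "\<forall>t\<in>I. \<forall>z\<in>K. z \<bullet> gradient f (x t) + t * (z \<bullet> u) = 0"
  using penalty_minimiser_stationary[OF C3] minimizer Zset_const ubar_const by metis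

lemma coercive_at_rho: obtains c where "c > 0" "\<forall>z. c * (norm z)^2 \<le> z \<bullet> (Hx \<rho> *v z)"
  using pd_coercive[of "Hx \<rho>"] pd by blast

abbreviation "Pm \<equiv> active_system.Pm (Hx \<rho>) Z U"

lemma Pm_in_K: "Pm *v y \<in> K"
  using active_system.Pm_in_K[OF active_system[OF \<rho>]] .

lemma Pm_solves: "z \<in> K \<Longrightarrow> z \<bullet> (Hx \<rho> *v (Pm *v y)) = z \<bullet> y"
  using active_system.Pm_solves[OF active_system[OF \<rho>]] .

lemma Pm_entry: "Pm $ i $ j = P \<rho> i j"
  unfolding active_system.Pm_def[OF active_system[OF \<rho>]] by (simp add: Pmat_eq[OF \<rho>])

definition "x' = - (Pm *v u)"

lemma x_has_derivative: "(x has_derivative (\<lambda>h. h *\<^sub>R x')) (at \<rho>)"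
proof -
  obtain c where c: "c > 0" "\<forall>z. c * (norm z)^2 \<le> z \<bullet> (Hx \<rho> *v z)" by (rule coercive_at_rho)
  have "continuous (at \<rho>) x"
    using cont I \<rho> continuous_on_eq_continuous_at by blast
  moreover have "x' \<in> K" unfolding x'_def by (rule subspace_neg[OF subspace_null_rows Pm_in_K])
  moreover have "\<forall>z\<in>K. z \<bullet> (Hx \<rho> *v x') = - (z \<bullet> u)"
    using Pm_solves by (simp add: x'_def linear_neg[OF matrix_vector_mul_linear])
  ultimately show ?thesis
    using stationary_curve_has_derivative[OF I \<rho> subspace_null_rows _ _ stationary gradient_has_derivative[OF C3] c(1)]
      x_diff_in_K c(2) by blast
qed

definition "Hdot = (\<chi> k l. \<Sum>m\<in>UNIV. x' $ m * partial m (partial k (partial l f)) (x \<rho>))"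

lemma hess_has_derivative: "((\<lambda>t. Hx t $ k $ l) has_real_derivative Hdot $ k $ l) (at \<rho>)"
proof -
  define F where "F = partial k (partial l f)"
  have F: "F differentiable at (x \<rho>)" unfolding F_def using C3_differentiable(3)[OF C3] by blast
  have "(F has_derivative frechet_derivative F (at (x \<rho>))) (at (x \<rho>))"
    using F frechet_derivative_works by blast
  from diff_chain_at[OF x_has_derivative this]
  have "((F \<circ> x) has_derivative (\<lambda>h. frechet_derivative F (at (x \<rho>)) (h *\<^sub>R x'))) (at \<rho>)"
    by (simp add: o_def)
  moreover have "frechet_derivative F (at (x \<rho>)) (h *\<^sub>R x') = Hdot $ k $ l * h" for h
    using linear_scale[OF linear_frechet_derivative[OF F]] frechet_derivative_partials[OF F, of x']
    by (simp add: Hdot_def F_def mult.commute)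
  moreover have "F \<circ> x = (\<lambda>t. Hx t $ k $ l)" by (simp add: F_def hess_def fun_eq_iff)
  ultimately show ?thesis by (simp add: has_field_derivative_def)
qed

text \<open>The vector \<open>D\<^bold>H(x) P(x) u\<^sub>\<bar>\<Z>\<^sub>\<close> of the theorem, indexed like \<open>vec H\<close>; it is \<open>- vec (dH/dt)\<close>.\<close>
abbreviation "DHPu c \<equiv> \<Sum>m\<in>UNIV. DHess f (x \<rho>) c m * (\<Sum>n\<in>UNIV. P \<rho> m n * u $ n)"

lemma DHPu_eq: "DHPu (l, k) = - Hdot $ k $ l"
proof -
  have "(\<Sum>n\<in>UNIV. P \<rho> m n * u $ n) = - x' $ m" for m
    by (simp add: x'_def matrix_vector_mult_def Pm_entry)
  moreover have "DHess f (x \<rho>) (l, k) m = partial m (partial k (partial l f)) (x \<rho>)" for m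
  proof -
    have "(\<lambda>y. hess f y $ k $ l) = partial k (partial l f)" by (simp add: hess_def fun_eq_iff)
    then show ?thesis by (simp add: DHess_def)
  qed
  ultimately show ?thesis by (simp add: Hdot_def sum_negf mult.commute)
qed

lemma constrained_path_has_derivative:
  assumes yK: "\<forall>t\<in>I. y t - y \<rho> \<in> K" and eq: "\<forall>t\<in>I. \<forall>z\<in>K. z \<bullet> (Hx t *v y t) = z \<bullet> b"
  shows "(y has_derivative (\<lambda>h. h *\<^sub>R - (Pm *v (Hdot *v y \<rho>)))) (at \<rho>)"
proof -
  obtain c where c: "c > 0" "\<forall>z. c * (norm z)^2 \<le> z \<bullet> (Hx \<rho> *v z)" by (rule coercive_at_rho)
  show ?thesis
  proof (rule variational_solution_has_derivative[OF I \<rho> subspace_null_rows yK eq _ c(1)])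
    show "\<forall>i j. ((\<lambda>t. Hx t $ i $ j) has_real_derivative Hdot $ i $ j) (at \<rho>)"
      using hess_has_derivative by blast
    show "\<forall>z\<in>K. c * (norm z)^2 \<le> z \<bullet> (Hx \<rho> *v z)" using c(2) by blast
    show "- (Pm *v (Hdot *v y \<rho>)) \<in> K" by (rule subspace_neg[OF subspace_null_rows Pm_in_K])
    show "\<forall>z\<in>K. z \<bullet> (Hx \<rho> *v - (Pm *v (Hdot *v y \<rho>))) = - (z \<bullet> (Hdot *v y \<rho>))"
      using Pm_solves by (simp add: linear_neg[OF matrix_vector_mul_linear])
  qed
qed

lemma P_has_derivative:
  "((\<lambda>t. P t i j) has_real_derivative - (\<Sum>k\<in>UNIV. P \<rho> i k * (\<Sum>l\<in>UNIV. Hdot $ k $ l * P \<rho> l j))) (at \<rho>)"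
proof -
  define y where "y t = (\<chi> i. P t i j)" for t
  have y: "y t = active_system.Pcol (Hx t) Z U j" if "t \<in> I" for t
    unfolding y_def active_system.Pcol_def[OF active_system[OF that]] Pmat_eq[OF that] ..
  have yK: "y t \<in> K" if "t \<in> I" for t
    using active_system.Pcol_in_K[OF active_system[OF that]] y[OF that] by simp
  have "(y has_derivative (\<lambda>h. h *\<^sub>R - (Pm *v (Hdot *v y \<rho>)))) (at \<rho>)"
  proof (rule constrained_path_has_derivative)
    show "\<forall>t\<in>I. y t - y \<rho> \<in> K" using yK \<rho> subspace_diff[OF subspace_null_rows] by blast
    show "\<forall>t\<in>I. \<forall>z\<in>K. z \<bullet> (Hx t *v y t) = z \<bullet> axis j 1"
      using active_system.Pcol_solves[OF active_system] y by (simp flip: cart_eq_inner_axis)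
  qed
  from has_derivative_vec_nth[OF this, of i] show ?thesis
    by (simp add: y_def matrix_vector_mult_def Pm_entry)
qed

definition "q t a = (\<chi> i. Q t i a)"

lemma q_eq: "t \<in> I \<Longrightarrow> q t a = active_system.Qcol (Hx t) Z U a"
  unfolding q_def active_system.Qcol_def[OF active_system] Qmat_eq ..

lemma q_has_derivative:
  assumes a: "a \<in> Z"
  shows "((\<lambda>t. q t a) has_derivative (\<lambda>h. h *\<^sub>R - (Pm *v (Hdot *v q \<rho> a)))) (at \<rho>)"
proof (rule constrained_path_has_derivative)
  show "\<forall>t\<in>I. q t a - q \<rho> a \<in> K"
    using active_system.U_Qcol[OF active_system a] q_eq \<rho>
    by (auto simp: null_rows_def inner_diff_right)
  show "\<forall>t\<in>I. \<forall>z\<in>K. z \<bullet> (Hx t *v q t a) = z \<bullet> 0"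
    using active_system.Qcol_orthogonal[OF active_system] q_eq by simp
qed

lemma Q_has_derivative:
  assumes a: "a \<in> Z"
  shows "((\<lambda>t. Q t i a) has_real_derivative - (\<Sum>k\<in>UNIV. P \<rho> i k * (\<Sum>l\<in>UNIV. Hdot $ k $ l * Q \<rho> l a))) (at \<rho>)"
  using has_derivative_vec_nth[OF q_has_derivative[OF a], of i]
  by (simp add: q_def matrix_vector_mult_def Pm_entry)

lemma hess_symmetric_form: "p \<bullet> (Hx t *v q') = q' \<bullet> (Hx t *v p)"
  by (metis dot_lmul_matrix hess_transpose[OF C3] inner_commute transpose_matrix_vector)

text \<open>\<open>R = - Q\<^sup>t H Q\<close>; since \<open>dQ/dt\<close> lies in \<open>K\<close> and \<open>H Q \<perp> K\<close>, only \<open>dH/dt\<close> contributes: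
  \<open>dR/dt = - Q\<^sup>t (dH/dt) Q\<close>.\<close>
lemma R_has_derivative:
  assumes a: "a \<in> Z" and b: "b \<in> Z"
  shows "((\<lambda>t. Rmat f v d r w e s (x t) b a) has_real_derivative - (q \<rho> b \<bullet> (Hdot *v q \<rho> a))) (at \<rho>)"
proof -
  define q' where "q' c = - (Pm *v (Hdot *v q \<rho> c))" for c
  have q'K: "q' c \<in> K" for c unfolding q'_def by (rule subspace_neg[OF subspace_null_rows Pm_in_K])
  have orth: "z \<bullet> (Hx \<rho> *v q \<rho> c) = 0" if "z \<in> K" for z c
    using active_system.Qcol_orthogonal[OF active_system[OF \<rho>] that] q_eq[OF \<rho>] by simp
  have "((\<lambda>t. q t b \<bullet> (Hx t *v q t a)) has_real_derivative
      q' b \<bullet> (Hx \<rho> *v q \<rho> a) + q \<rho> b \<bullet> (Hdot *v q \<rho> a) + q \<rho> b \<bullet> (Hx \<rho> *v q' a)) (at \<rho>)"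
    using q_has_derivative[OF a] q_has_derivative[OF b] hess_has_derivative unfolding q'_def
    by (intro bilinear_form_has_real_derivative) auto
  moreover have "q' b \<bullet> (Hx \<rho> *v q \<rho> a) = 0" "q \<rho> b \<bullet> (Hx \<rho> *v q' a) = 0"
    using orth[OF q'K] by (simp_all only: hess_symmetric_form[of "q \<rho> b"])
  ultimately have "((\<lambda>t. - (q t b \<bullet> (Hx t *v q t a))) has_real_derivative - (q \<rho> b \<bullet> (Hdot *v q \<rho> a))) (at \<rho>)"
    using DERIV_minus by fastforce
  moreover have "- (q t b \<bullet> (Hx t *v q t a)) = Rmat f v d r w e s (x t) b a" if "t \<in> I" for t
    using active_system.Qcol_H_Qcol[OF active_system[OF that] a b] Rmat_eq[OF that] q_eq[OF that] by simp
  ultimately show ?thesis by (rule has_field_derivative_transform_within_open[OF _ I \<rho>])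
qed

lemma P_sym: "P \<rho> i j = P \<rho> j i"
  using active_system.P_sym[OF active_system[OF \<rho>]] by (simp add: Pmat_eq[OF \<rho>])

lemma vec_P_has_derivative:
  "((\<lambda>t. vecm (P t) (j, i)) has_real_derivative (\<Sum>c\<in>UNIV. kron (P \<rho>) (P \<rho>) (j, i) c * DHPu c)) (at \<rho>)"
proof -
  have "(\<Sum>c\<in>UNIV. kron (P \<rho>) (P \<rho>) (j, i) c * DHPu c)
      = - (\<Sum>k\<in>UNIV. P \<rho> i k * (\<Sum>l\<in>UNIV. Hdot $ k $ l * P \<rho> l j))"
    unfolding sum_kron DHPu_eq by (simp add: P_sym[of j] sum_negf mult_ac)
  then show ?thesis using P_has_derivative by (simp add: vecm_def)
qed

lemma vec_Q_has_derivative: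
  assumes "a \<in> Z"
  shows "((\<lambda>t. vecm (Q t) (a, i)) has_real_derivative
      (\<Sum>c\<in>UNIV. kron (transm (Q \<rho>)) (P \<rho>) (a, i) c * DHPu c)) (at \<rho>)"
proof -
  have "(\<Sum>c\<in>UNIV. kron (transm (Q \<rho>)) (P \<rho>) (a, i) c * DHPu c)
      = - (\<Sum>k\<in>UNIV. P \<rho> i k * (\<Sum>l\<in>UNIV. Hdot $ k $ l * Q \<rho> l a))"
    unfolding sum_kron DHPu_eq by (simp add: transm_def sum_negf mult_ac)
  then show ?thesis using Q_has_derivative[OF assms] by (simp add: vecm_def)
qed

lemma vec_R_has_derivative:
  assumes "a \<in> Z" "b \<in> Z"
  shows "((\<lambda>t. vecm (Rmat f v d r w e s (x t)) (a, b)) has_real_derivative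
      (\<Sum>c\<in>UNIV. kron (transm (Q \<rho>)) (transm (Q \<rho>)) (a, b) c * DHPu c)) (at \<rho>)"
proof -
  have "(\<Sum>c\<in>UNIV. kron (transm (Q \<rho>)) (transm (Q \<rho>)) (a, b) c * DHPu c) = - (q \<rho> b \<bullet> (Hdot *v q \<rho> a))"
    unfolding sum_kron DHPu_eq sum_bilinear_form[symmetric]
    by (simp add: transm_def q_def sum_negf sum_distrib_left mult_ac)
  then show ?thesis using R_has_derivative[OF assms] by (simp add: vecm_def)
qed

end

text \<open>Proposition 3: the hypotheses are those of \<open>penalty_path\<close>.\<close>
theorem proposition3:
  fixes f :: "real^'n \<Rightarrow> real"
    and v w :: "nat \<Rightarrow> real^'n" and d e :: "nat \<Rightarrow> real" and r s :: nat
    and I :: "real set" and x :: "real \<Rightarrow> real^'n" and \<rho> :: real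
  assumes C3: "C3 f"
    and pd: "\<forall>y z. z \<noteq> 0 \<longrightarrow> z \<bullet> (hess f y *v z) > 0"
    and I: "open I" "is_interval I" "I \<noteq> {}" "I \<subseteq> {0<..}"
    and minimizer: "\<forall>t\<in>I. \<forall>y. penalty f v d r w e s t (x t) \<le> penalty f v d r w e s t y"
    and cont: "continuous_on I x"
    and const: "\<forall>t1\<in>I. \<forall>t2\<in>I.
         NE v d r (x t1) = NE v d r (x t2) \<and> ZE v d r (x t1) = ZE v d r (x t2)
       \<and> PE v d r (x t1) = PE v d r (x t2) \<and> NI w e s (x t1) = NI w e s (x t2)
       \<and> ZI w e s (x t1) = ZI w e s (x t2) \<and> PI' w e s (x t1) = PI' w e s (x t2)"
    and indep: "\<forall>t\<in>I. inj_on (urow v w) (Zset v d r w e s (x t))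
                  \<and> independent (urow v w ` Zset v d r w e s (x t))"
    and \<rho>: "\<rho> \<in> I"
  shows "let P = Pmat f v d r w e s (x \<rho>); Q = Qmat f v d r w e s (x \<rho>);
             Z = Zset v d r w e s (x \<rho>);
             Pu = (\<lambda>m. \<Sum>n\<in>UNIV. P m n * ubar v d r w e s (x \<rho>) $ n);
             dh = (\<lambda>c. \<Sum>m\<in>UNIV. DHess f (x \<rho>) c m * Pu m) in
     (\<forall>idx. ((\<lambda>t. vecm (Pmat f v d r w e s (x t)) idx)
              has_real_derivative (\<Sum>c\<in>UNIV. kron P P idx c * dh c)) (at \<rho>))
   \<and> (\<forall>idx\<in>Z \<times> UNIV. ((\<lambda>t. vecm (Qmat f v d r w e s (x t)) idx)
              has_real_derivative (\<Sum>c\<in>UNIV. kron (transm Q) P idx c * dh c)) (at \<rho>))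
   \<and> (\<forall>idx\<in>Z \<times> Z. ((\<lambda>t. vecm (Rmat f v d r w e s (x t)) idx)
              has_real_derivative (\<Sum>c\<in>UNIV. kron (transm Q) (transm Q) idx c * dh c)) (at \<rho>))"
proof -
  interpret penalty_path f v w d e r s I x \<rho>
    by (rule penalty_path.intro[OF C3 pd I(1) minimizer cont const indep \<rho>])
  show ?thesis
    unfolding Let_def using vec_P_has_derivative vec_Q_has_derivative vec_R_has_derivative by auto
qed

end
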